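(* Fix a player $i$ of a finite extensive-form game with perfect recall, and consider the following online learner $\mathcal{R}$ over the set $\operatorname{co}\Phi^{(i)}$. It maintains one instance $\mathcal{R}_{\hat I}$ of the CFR algorithm on $Q^{(i)}_{\hat I}$ for each $\hat I\in\mathcal{I}^{(i)}$, and one instance $\mathcal{R}_\Delta$ of regret matching on the simplex $\Delta^{|\mathcal{I}^{(i)}|}$. At each time $t$: it obtains $\vec{\lambda}^t$ from $\mathcal{R}_\Delta$ and $\vec{q}^t_{\hat I}\in Q^{(i)}_{\hat I}$ from each $\mathcal{R}_{\hat I}$, and outputs $\phi^t=\sum_{\hat I}\vec{\lambda}^t[\hat I]\,\phi_{\hat I,\vec{q}^t_{\hat I}}$. Upon observing a linear utility $L^t:\operatorname{co}\Phi^{(i)}\to\mathbb{R}$, it gives each $\mathcal{R}_{\hat I}$ the linear utility $\vec{q}\mapsto L^t(\phi_{\hat I,\vec{q}})-L^t(\phi_{\hat I,\vec{0}})$ and gives $\mathcal{R}_\Delta$ the linear utility $\vec{\lambda}\mapsto\sum_{\hat I}\vec{\lambda}[\hat I]L^t(\phi_{\hat I,\vec{q}^t_{\hat I}})$. Suppose $\max_{\phi,\phi'\in\operatorname{co}\Phi^{(i)}}\{L^t(\phi)-L^t(\phi')\}\le U$ for all $t$. Then the outputs $\phi^1,\ldots,\phi^T$ satisfy $$\max_{\phi^*\in\operatorname{co}\Phi^{(i)}}\sum_{t=1}^T\big(L^t(\phi^* )-L^t(\phi^t)\big)\le 2U|\Sigma^{(i)}|\sqrt{T}.$$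
   Context: Setting: a finite game tree with players $[n]$ and chance; player $i$'s decision nodes are partitioned into information sets $\mathcal{I}^{(i)}$ with action sets $\mathscr{A}(I)$; perfect recall (all nodes of an information set share the same history of player $i$'s own actions). For $I,I'\in\mathcal{I}^{(i)}$, $I\prec I'$ if a root-to-$I'$ path passes through $I$. Sequences $\Sigma^{(i)}=\{(I,a)\}\cup\{\varnothing\}$; $\sigma^{(i)}(I)$ is the last sequence of player $i$ on the path to $I$ ($\varnothing$ if none); $\sigma\succeq I$ means $\sigma=(I',a')$ with $I'=I$ or $I\prec I'$; $\Sigma^{(i)}_I=\{\sigma:\sigma\succeq I\}$. $Q^{(i)}_I\coloneqq\{\vec{q}\in\mathbb{R}^{|\Sigma^{(i)}_I|}_{\ge0}:\sum_{a\in\mathscr{A}(I)}\vec{q}[(I,a)]=1,\ \vec{q}[\sigma^{(i)}(I')]=\sum_{a\in\mathscr{A}(I')}\vec{q}[(I',a)]\ \forall I'\succ I\}$, and $\Pi^{(i)}_I=Q^{(i)}_I\cap\{0,1\}^{|\Sigma^{(i)}_I|}$. For $\hat I\in\mathcal{I}^{(i)}$ and any vector $\vec{y}\in\mathbb{R}^{|\Sigma^{(i)}_{\hat I}|}$, $\phi_{\hat I,\vec{y}}$ is the linear map $\vec{x}\mapsto M\vec{x}$ on $\mathbb{R}^{|\Sigma^{(i)}|}$ with $M[\sigma_r,\sigma_c]=1$ if $\sigma_c\not\succeq\hat I$ and $\sigma_r=\sigma_c$; $M[\sigma_r,\sigma_c]=\vec{y}[\sigma_r]$ if $\sigma_c=\sigma^{(i)}(\hat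 I)$ and $\sigma_r\succeq\hat I$; $0$ otherwise. $\Phi^{(i)}\coloneqq\{\phi_{\hat I,\hat{\vec{\pi}}}:\hat I\in\mathcal{I}^{(i)},\hat{\vec{\pi}}\in\Pi^{(i)}_{\hat I}\}$, and $\operatorname{co}\Phi^{(i)}$ is its convex hull (so $\operatorname{co}\Phi^{(i)}=\{\sum_{\hat I}\vec{\lambda}[\hat I]\phi_{\hat I,\vec{q}_{\hat I}}:\vec{\lambda}\in\Delta^{|\mathcal{I}^{(i)}|},\vec{q}_{\hat I}\in Q^{(i)}_{\hat I}\}$). Regret matching on $\Delta^m$: with cumulative regrets $r^t[j]=\sum_{s<t}(\ell^s(\vec{e}_j)-\ell^s(\vec{x}^s))$, output $\vec{x}^t\propto[r^t]^+$ (uniform if $[r^t]^+=0$). CFR (counterfactual regret minimization, Zinkevich et al. 2008) on a tree-form sequence-form set $Q^{(i)}_I$: runs regret matching locally at each information set on counterfactual utilities and outputs the induced sequence-form strategy. Regret of an online learner on a set $\mathcal{X}$ with linear utilities $\ell^t$: $\max_{x^*\in\mathcal{X}}\sum_t(\ell^t(x^* )-\ell^t(x^t))$. *)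

theory Defs
  imports "HOL-Analysis.Analysis"
begin

text \<open>
  Player i's information-set structure (tree-form decision structure induced by
  a finite extensive-form game with perfect recall).  A sequence is ('i \<times> 'a) option,
  None being the empty sequence.  par I is sigma(I), the last own sequence on
  the path to I.  Vectors are functions seq \<Rightarrow> real, matrices seq \<Rightarrow> seq \<Rightarrow> real.
\<close>

type_synonym ('i,'a) sq = "('i \<times> 'a) option"

definition succ_rel :: "'i set \<Rightarrow> ('i \<Rightarrow> ('i,'a) sq) \<Rightarrow> ('i \<times> 'i) set" where
  "succ_rel IS par = {(J, I). I \<in> IS \<and> (\<exists>a. par I = Some (J, a))}"

definition prec :: "'i set \<Rightarrow> ('i \<Rightarrow> ('i,'a) sq) \<Rightarrow> 'i \<Rightarrow> 'i \<Rightarrow> bool" where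
  "prec IS par I I' \<longleftrightarrow> (I, I') \<in> (succ_rel IS par)\<^sup>+"

text \<open>Well-formedness: finitely many infosets, finite nonempty action sets,
  parent sequences are valid sequences, and the ancestor relation is acyclic
  (tree/forest structure implied by perfect recall).\<close>
definition tfdp :: "'i set \<Rightarrow> ('i \<Rightarrow> 'a set) \<Rightarrow> ('i \<Rightarrow> ('i,'a) sq) \<Rightarrow> bool" where
  "tfdp IS A par \<longleftrightarrow> finite IS \<and> (\<forall>I\<in>IS. finite (A I) \<and> A I \<noteq> {}) \<and>
     (\<forall>I\<in>IS. \<forall>J a. par I = Some (J, a) \<longrightarrow> J \<in> IS \<and> a \<in> A J) \<and>
     acyclic (succ_rel IS par)"

definition seqs :: "'i set \<Rightarrow> ('i \<Rightarrow> 'a set) \<Rightarrow> ('i,'a) sq set" where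
  "seqs IS A = insert None {Some (I, a) | I a. I \<in> IS \<and> a \<in> A I}"

definition seq_ge :: "'i set \<Rightarrow> ('i \<Rightarrow> ('i,'a) sq) \<Rightarrow> ('i,'a) sq \<Rightarrow> 'i \<Rightarrow> bool" where
  "seq_ge IS par s I \<longleftrightarrow> (\<exists>I' a'. s = Some (I', a') \<and> (I' = I \<or> prec IS par I I'))"

definition seqs_below :: "'i set \<Rightarrow> ('i \<Rightarrow> 'a set) \<Rightarrow> ('i \<Rightarrow> ('i,'a) sq) \<Rightarrow> 'i \<Rightarrow> ('i,'a) sq set" where
  "seqs_below IS A par I = {s \<in> seqs IS A. seq_ge IS par s I}"

text \<open>Q^(i)_I; vectors of R^{Sigma_I} are represented as functions vanishing outside Sigma_I.\<close>
definition Qset :: "'i set \<Rightarrow> ('i \<Rightarrow> 'a set) \<Rightarrow> ('i \<Rightarrow> ('i,'a) sq) \<Rightarrow> 'i \<Rightarrow> (('i,'a) sq \<Rightarrow> real) set" where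
  "Qset IS A par I = {q. (\<forall>s. s \<notin> seqs_below IS A par I \<longrightarrow> q s = 0) \<and>
      (\<forall>s\<in>seqs_below IS A par I. q s \<ge> 0) \<and>
      (\<Sum>a\<in>A I. q (Some (I, a))) = 1 \<and>
      (\<forall>I'\<in>IS. prec IS par I I' \<longrightarrow> q (par I') = (\<Sum>a\<in>A I'. q (Some (I', a))))}"

definition Piset :: "'i set \<Rightarrow> ('i \<Rightarrow> 'a set) \<Rightarrow> ('i \<Rightarrow> ('i,'a) sq) \<Rightarrow> 'i \<Rightarrow> (('i,'a) sq \<Rightarrow> real) set" where
  "Piset IS A par I = {q \<in> Qset IS A par I. \<forall>s. q s \<in> {0, 1}}"

definition phi :: "'i set \<Rightarrow> ('i \<Rightarrow> 'a set) \<Rightarrow> ('i \<Rightarrow> ('i,'a) sq) \<Rightarrow> 'i \<Rightarrow> (('i,'a) sq \<Rightarrow> real)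
                   \<Rightarrow> ('i,'a) sq \<Rightarrow> ('i,'a) sq \<Rightarrow> real" where
  "phi IS A par I y r c =
     (if r \<in> seqs IS A \<and> c \<in> seqs IS A then
        (if \<not> seq_ge IS par c I \<and> r = c then 1
         else if c = par I \<and> seq_ge IS par r I then y r
         else 0)
      else 0)"

definition Phi :: "'i set \<Rightarrow> ('i \<Rightarrow> 'a set) \<Rightarrow> ('i \<Rightarrow> ('i,'a) sq)
                   \<Rightarrow> (('i,'a) sq \<Rightarrow> ('i,'a) sq \<Rightarrow> real) set" where
  "Phi IS A par = {phi IS A par I p | I p. I \<in> IS \<and> p \<in> Piset IS A par I}"

definition coPhi :: "'i set \<Rightarrow> ('i \<Rightarrow> 'a set) \<Rightarrow> ('i \<Rightarrow> ('i,'a) sq)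
                   \<Rightarrow> (('i,'a) sq \<Rightarrow> ('i,'a) sq \<Rightarrow> real) set" where
  "coPhi IS A par = {(\<lambda>r c. \<Sum>k<n. w k * M k r c) | (n::nat) w M.
      (\<forall>k<n. w k \<ge> 0 \<and> M k \<in> Phi IS A par) \<and> (\<Sum>k<n. w k) = 1}"

text \<open>Linear utility on the space of Sigma \<times> Sigma matrices, given by its coefficient matrix G.\<close>
definition Lval :: "'i set \<Rightarrow> ('i \<Rightarrow> 'a set) \<Rightarrow> (('i,'a) sq \<Rightarrow> ('i,'a) sq \<Rightarrow> real)
                    \<Rightarrow> (('i,'a) sq \<Rightarrow> ('i,'a) sq \<Rightarrow> real) \<Rightarrow> real" where
  "Lval IS A G M = (\<Sum>r\<in>seqs IS A. \<Sum>c\<in>seqs IS A. G r c * M r c)"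

definition rm_of :: "'k set \<Rightarrow> ('k \<Rightarrow> real) \<Rightarrow> 'k \<Rightarrow> real" where
  "rm_of K r = (let S = (\<Sum>k\<in>K. max 0 (r k)) in
     (\<lambda>j. if j \<in> K then (if S = 0 then 1 / real (card K) else max 0 (r j) / S) else 0))"

definition unitv :: "'k \<Rightarrow> 'k \<Rightarrow> real" where
  "unitv j = (\<lambda>k. if k = j then 1 else 0)"

text \<open>Cumulative regrets r^t[j] = sum_{s<t} (l^s(e_j) - l^s(x^s)) of regret matching
  on K against the utility sequence l (time starts at 0).\<close>
primrec rm_cumreg :: "'k set \<Rightarrow> (nat \<Rightarrow> ('k \<Rightarrow> real) \<Rightarrow> real) \<Rightarrow> nat \<Rightarrow> 'k \<Rightarrow> real" where
  "rm_cumreg K l 0 = (\<lambda>j. 0)"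
| "rm_cumreg K l (Suc t) = (\<lambda>j. rm_cumreg K l t j + (l t (unitv j) - l t (rm_of K (rm_cumreg K l t))))"

definition rm :: "'k set \<Rightarrow> (nat \<Rightarrow> ('k \<Rightarrow> real) \<Rightarrow> real) \<Rightarrow> nat \<Rightarrow> 'k \<Rightarrow> real" where
  "rm K l t = rm_of K (rm_cumreg K l t)"

definition subI :: "'i set \<Rightarrow> ('i \<Rightarrow> ('i,'a) sq) \<Rightarrow> 'i \<Rightarrow> 'i set" where
  "subI IS par Ih = {J \<in> IS. J = Ih \<or> prec IS par Ih J}"

definition path_seqs :: "'i set \<Rightarrow> ('i \<Rightarrow> ('i,'a) sq) \<Rightarrow> 'i \<Rightarrow> 'a \<Rightarrow> ('i \<times> 'a) set" where
  "path_seqs IS par J b = insert (J, b) {s. \<exists>K. (K = J \<or> prec IS par K J) \<and> par K = Some s}"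

text \<open>Counterfactual utility of (I,a) given the gradient g and local strategies x:
  cf(I,a) = sum over sequences (J,b) \<succeq> (I,a) of g[(J,b)] times the product of
  x_K[c] over the sequences (K,c) strictly after (I,a) on the path to (J,b).
  (This is the closed form of the usual recursion
   cf(I,a) = g[(I,a)] + sum_{J child of (I,a)} sum_b x_J[b] cf(J,b).)\<close>
definition cfv :: "'i set \<Rightarrow> ('i \<Rightarrow> 'a set) \<Rightarrow> ('i \<Rightarrow> ('i,'a) sq) \<Rightarrow> (('i,'a) sq \<Rightarrow> real)
                   \<Rightarrow> ('i \<Rightarrow> 'a \<Rightarrow> real) \<Rightarrow> 'i \<Rightarrow> 'a \<Rightarrow> real" where
  "cfv IS A par g x I a =
     (\<Sum>s\<in>{(J, b). J \<in> IS \<and> b \<in> A J \<and> (I, a) \<in> path_seqs IS par J b}.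
        g (Some s) * (\<Prod>(K, c)\<in>{(K, c) \<in> path_seqs IS par (fst s) (snd s). prec IS par I K}. x K c))"

primrec cfr_reg :: "'i set \<Rightarrow> ('i \<Rightarrow> 'a set) \<Rightarrow> ('i \<Rightarrow> ('i,'a) sq) \<Rightarrow> 'i
                    \<Rightarrow> (nat \<Rightarrow> (('i,'a) sq \<Rightarrow> real) \<Rightarrow> real) \<Rightarrow> nat \<Rightarrow> 'i \<Rightarrow> 'a \<Rightarrow> real" where
  "cfr_reg IS A par Ih l 0 = (\<lambda>J a. 0)"
| "cfr_reg IS A par Ih l (Suc t) =
     (let R = cfr_reg IS A par Ih l t;
          x = (\<lambda>J. rm_of (A J) (R J));
          g = (\<lambda>s. if s \<in> seqs_below IS A par Ih then l t (unitv s) else 0);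
          cf = cfv IS A par g x
      in (\<lambda>J a. if J \<in> subI IS par Ih
                 then R J a + (cf J a - (\<Sum>b\<in>A J. x J b * cf J b)) else 0))"

definition cfr_local :: "'i set \<Rightarrow> ('i \<Rightarrow> 'a set) \<Rightarrow> ('i \<Rightarrow> ('i,'a) sq) \<Rightarrow> 'i
                    \<Rightarrow> (nat \<Rightarrow> (('i,'a) sq \<Rightarrow> real) \<Rightarrow> real) \<Rightarrow> nat \<Rightarrow> 'i \<Rightarrow> 'a \<Rightarrow> real" where
  "cfr_local IS A par Ih l t J = rm_of (A J) (cfr_reg IS A par Ih l t J)"

definition cfr_out :: "'i set \<Rightarrow> ('i \<Rightarrow> 'a set) \<Rightarrow> ('i \<Rightarrow> ('i,'a) sq) \<Rightarrow> 'i
                    \<Rightarrow> (nat \<Rightarrow> (('i,'a) sq \<Rightarrow> real) \<Rightarrow> real) \<Rightarrow> nat \<Rightarrow> ('i,'a) sq \<Rightarrow> real" where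
  "cfr_out IS A par Ih l t s =
     (if s \<in> seqs_below IS A par Ih then
        (\<Prod>(K, c)\<in>{(K, c) \<in> path_seqs IS par (fst (the s)) (snd (the s)). K \<in> subI IS par Ih}.
            cfr_local IS A par Ih l t K c)
      else 0)"

definition util_I :: "'i set \<Rightarrow> ('i \<Rightarrow> 'a set) \<Rightarrow> ('i \<Rightarrow> ('i,'a) sq)
                      \<Rightarrow> (nat \<Rightarrow> ('i,'a) sq \<Rightarrow> ('i,'a) sq \<Rightarrow> real) \<Rightarrow> 'i
                      \<Rightarrow> nat \<Rightarrow> (('i,'a) sq \<Rightarrow> real) \<Rightarrow> real" where
  "util_I IS A par G Ih t q =
     Lval IS A (G t) (phi IS A par Ih q) - Lval IS A (G t) (phi IS A par Ih (\<lambda>_. 0))"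

definition q_out :: "'i set \<Rightarrow> ('i \<Rightarrow> 'a set) \<Rightarrow> ('i \<Rightarrow> ('i,'a) sq)
                      \<Rightarrow> (nat \<Rightarrow> ('i,'a) sq \<Rightarrow> ('i,'a) sq \<Rightarrow> real) \<Rightarrow> 'i \<Rightarrow> nat \<Rightarrow> ('i,'a) sq \<Rightarrow> real" where
  "q_out IS A par G Ih t = cfr_out IS A par Ih (util_I IS A par G Ih) t"

definition util_Delta :: "'i set \<Rightarrow> ('i \<Rightarrow> 'a set) \<Rightarrow> ('i \<Rightarrow> ('i,'a) sq)
                      \<Rightarrow> (nat \<Rightarrow> ('i,'a) sq \<Rightarrow> ('i,'a) sq \<Rightarrow> real) \<Rightarrow> nat \<Rightarrow> ('i \<Rightarrow> real) \<Rightarrow> real" where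
  "util_Delta IS A par G t lam =
     (\<Sum>Ih\<in>IS. lam Ih * Lval IS A (G t) (phi IS A par Ih (q_out IS A par G Ih t)))"

definition lam_out :: "'i set \<Rightarrow> ('i \<Rightarrow> 'a set) \<Rightarrow> ('i \<Rightarrow> ('i,'a) sq)
                      \<Rightarrow> (nat \<Rightarrow> ('i,'a) sq \<Rightarrow> ('i,'a) sq \<Rightarrow> real) \<Rightarrow> nat \<Rightarrow> 'i \<Rightarrow> real" where
  "lam_out IS A par G t = rm IS (util_Delta IS A par G) t"

definition phi_out :: "'i set \<Rightarrow> ('i \<Rightarrow> 'a set) \<Rightarrow> ('i \<Rightarrow> ('i,'a) sq)
                      \<Rightarrow> (nat \<Rightarrow> ('i,'a) sq \<Rightarrow> ('i,'a) sq \<Rightarrow> real) \<Rightarrow> nat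
                      \<Rightarrow> ('i,'a) sq \<Rightarrow> ('i,'a) sq \<Rightarrow> real" where
  "phi_out IS A par G t = (\<lambda>r c. \<Sum>Ih\<in>IS. lam_out IS A par G t Ih *
                              phi IS A par Ih (q_out IS A par G Ih t) r c)"

end

theory Submission
  imports Defs
begin

(*
  By linearity of the utilities it suffices to bound the regret against a single comparator
  \<phi>_{I,\<pi>} with \<pi> \<in> \<Pi>_I. Since L^t(\<phi>^t) = \<Sum>_J \<lambda>^t[J] L^t(\<phi>_{J,q^t_J}), this regret splits
  into the regret of the CFR instance for I, on the utilities q \<mapsto> L^t(\<phi>_{I,q}) - L^t(\<phi>_{I,0}),
  plus the regret of regret matching on the simplex against the vertex I.

  The potential argument for regret matching bounds the second term by U sqrt(|\<I>| T).
  For the first, CFR's regret is the \<pi>-weighted sum of the local regret-matching regrets at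
  the information sets K below I, each at most U sqrt(|A(K)| T): a difference of counterfactual
  values at K is the utility difference of two strategies that steer to K and then play
  different actions, and both lie in co \<Phi> because \<phi>_{I,q} \<in> co \<Phi> for every q \<in> Q_I
  (Kuhn's theorem). Summing over K gives U |\<Sigma>_I| sqrt T \<le> U |\<Sigma>| sqrt T for each term.
*)

lemma prod_in_01: "finite S \<Longrightarrow> \<forall>x\<in>S. f x \<in> {0, 1::real} \<Longrightarrow> prod f S \<in> {0, 1}"
  by (induction S rule: finite_induct) auto

lemma sqrt_of_nat_le: "sqrt (real n) \<le> real n"
proof (cases "n = 0")
  case False
  then have "sqrt (real n) * 1 \<le> sqrt (real n) * sqrt (real n)"
    by (intro mult_left_mono) auto
  then show ?thesis by simp
qed simp

lemma sum_PiE_prod_agree: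
  fixes y :: "'i \<Rightarrow> 'a \<Rightarrow> real"
  assumes S: "finite S" and D: "D \<subseteq> S" and h: "\<And>K. K \<in> D \<Longrightarrow> h K \<in> A K"
    and fin: "\<And>K. K \<in> S \<Longrightarrow> finite (A K)" and y: "\<And>K. K \<in> S \<Longrightarrow> (\<Sum>a\<in>A K. y K a) = 1"
  shows "(\<Sum>f\<in>PiE S A. (\<Prod>K\<in>S. y K (f K)) * (\<Prod>K\<in>D. if f K = h K then 1 else 0))
           = (\<Prod>K\<in>D. y K (h K))"
proof -
  let ?F = "\<lambda>K a. y K a * (if K \<in> D then if a = h K then 1 else 0 else 1)"
  have restrict: "(\<Prod>K\<in>D. g K) = (\<Prod>K\<in>S. if K \<in> D then g K else 1)" for g :: "'i \<Rightarrow> real"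
    using prod.inter_restrict[OF S, of g D] D by (simp add: Int_absorb1)
  have "(\<Sum>f\<in>PiE S A. (\<Prod>K\<in>S. y K (f K)) * (\<Prod>K\<in>D. if f K = h K then 1 else 0))
      = (\<Sum>f\<in>PiE S A. \<Prod>K\<in>S. ?F K (f K))"
    by (simp add: restrict prod.distrib)
  also have "\<dots> = (\<Prod>K\<in>S. \<Sum>a\<in>A K. ?F K a)"
    by (rule prod_sum_PiE[symmetric]) (use S fin in auto)
  also have "\<dots> = (\<Prod>K\<in>S. if K \<in> D then y K (h K) else 1)"
  proof (rule prod.cong[OF refl])
    fix K assume K: "K \<in> S"
    show "(\<Sum>a\<in>A K. ?F K a) = (if K \<in> D then y K (h K) else 1)"
      using h fin[OF K] y[OF K] by (simp add: if_distrib[of "\<lambda>x. y K _ * x"] cong: if_cong)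
  qed
  also have "\<dots> = (\<Prod>K\<in>D. y K (h K))"
    by (rule restrict[symmetric])
  finally show ?thesis .
qed

lemma functional_set_eq_graph:
  assumes "\<And>x y y'. (x, y) \<in> Q \<Longrightarrow> (x, y') \<in> Q \<Longrightarrow> y = y'"
  obtains h where "Q = (\<lambda>x. (x, h x)) ` fst ` Q"
proof
  let ?h = "\<lambda>x. THE y. (x, y) \<in> Q"
  have h: "?h x = y" if "(x, y) \<in> Q" for x y
    using that assms by (intro the_equality) blast+
  show "Q = (\<lambda>x. (x, ?h x)) ` fst ` Q"
  proof (intro equalityI subsetI)
    fix p assume p: "p \<in> Q"
    obtain x y where xy: "p = (x, y)" by fastforce
    then have "p = (x, ?h x)" using h p by simp
    then show "p \<in> (\<lambda>x. (x, ?h x)) ` fst ` Q"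
      using p xy by force
  next
    fix p assume "p \<in> (\<lambda>x. (x, ?h x)) ` fst ` Q"
    then show "p \<in> Q" using h by force
  qed
qed

section \<open>Regret matching\<close>

lemma rm_of_distribution:
  assumes "finite K" "K \<noteq> {}"
  shows "\<forall>j\<in>K. 0 \<le> rm_of K r j" and "(\<Sum>j\<in>K. rm_of K r j) = 1"
proof -
  define S where "S = (\<Sum>k\<in>K. max 0 (r k))"
  have "0 \<le> S" unfolding S_def by (intro sum_nonneg) auto
  then show "\<forall>j\<in>K. 0 \<le> rm_of K r j" by (simp add: rm_of_def Let_def S_def[symmetric])
  show "(\<Sum>j\<in>K. rm_of K r j) = 1"
  proof (cases "S = 0")
    case True
    then show ?thesis using assms by (simp add: rm_of_def Let_def S_def[symmetric])
  next
    case False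
    then have "(\<Sum>j\<in>K. max 0 (r j) / S) = 1"
      by (simp add: sum_divide_distrib[symmetric] S_def)
    then show ?thesis using False by (simp add: rm_of_def Let_def S_def[symmetric])
  qed
qed

lemma rm_of_blackwell:
  assumes "finite K"
  shows "(\<Sum>j\<in>K. max 0 (r j) * (c j - (\<Sum>k\<in>K. rm_of K r k * c k))) = 0"
proof -
  define S where "S = (\<Sum>k\<in>K. max 0 (r k))"
  define v where "v = (\<Sum>k\<in>K. rm_of K r k * c k)"
  show ?thesis
  proof (cases "S = 0")
    case True
    then have "\<forall>j\<in>K. max 0 (r j) = 0"
      using sum_nonneg_eq_0_iff[OF assms, of "\<lambda>k. max 0 (r k)"] unfolding S_def by auto
    then show ?thesis by simp
  next
    case False
    have "v = (\<Sum>k\<in>K. max 0 (r k) * c k) / S"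
      using False by (simp add: v_def rm_of_def Let_def S_def[symmetric] sum_divide_distrib)
    moreover have "(\<Sum>j\<in>K. max 0 (r j) * (c j - v)) = (\<Sum>j\<in>K. max 0 (r j) * c j) - S * v"
      by (simp add: right_diff_distrib sum_subtractf sum_distrib_right S_def)
    ultimately show ?thesis using False by (simp add: v_def)
  qed
qed

lemma max0_add_square_le: "(max 0 (a + r))\<^sup>2 \<le> (max 0 a + (r::real))\<^sup>2"
proof (cases "a < 0 \<and> 0 \<le> a + r")
  case True
  then have "\<bar>a + r\<bar> \<le> \<bar>r\<bar>" by auto
  then show ?thesis using True by (simp add: abs_le_square_iff)
next
  case False
  then show ?thesis by (cases "0 \<le> a") (auto simp: max_def)
qed

lemma convex_comb_regret_abs_le:
  fixes x c :: "'k \<Rightarrow> real"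
  assumes "finite K" and x: "\<forall>k\<in>K. 0 \<le> x k" "(\<Sum>k\<in>K. x k) = 1"
    and rng: "\<forall>j\<in>K. \<forall>k\<in>K. c j - c k \<le> D" and j: "j \<in> K"
  shows "\<bar>c j - (\<Sum>k\<in>K. x k * c k)\<bar> \<le> D"
proof -
  have "(\<Sum>k\<in>K. x k * (c j - c k)) = (\<Sum>k\<in>K. x k * c j) - (\<Sum>k\<in>K. x k * c k)"
    by (simp add: right_diff_distrib sum_subtractf)
  also have "(\<Sum>k\<in>K. x k * c j) = c j"
    using x by (simp add: sum_distrib_right[symmetric])
  finally have "c j - (\<Sum>k\<in>K. x k * c k) = (\<Sum>k\<in>K. x k * (c j - c k))" ..
  moreover have "(\<Sum>k\<in>K. x k * (c j - c k)) \<le> (\<Sum>k\<in>K. x k * D)"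
    using x rng j by (intro sum_mono mult_left_mono) auto
  moreover have "(\<Sum>k\<in>K. x k * (- D)) \<le> (\<Sum>k\<in>K. x k * (c j - c k))"
    using x rng j by (intro sum_mono mult_left_mono) force+
  moreover have "(\<Sum>k\<in>K. x k * D) = D" "(\<Sum>k\<in>K. x k * (- D)) = - D"
    using x by (simp_all add: sum_distrib_right[symmetric] sum_negf)
  ultimately show ?thesis by (simp add: abs_le_iff)
qed

text \<open>The cross term of the expanded square vanishes by Blackwell's condition.\<close>
lemma rm_potential_step:
  assumes fin: "finite K" and ne: "K \<noteq> {}" and rng: "\<forall>j\<in>K. \<forall>k\<in>K. c j - c k \<le> D"
  shows "(\<Sum>j\<in>K. (max 0 (R j + (c j - (\<Sum>k\<in>K. rm_of K R k * c k))))\<^sup>2)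
           \<le> (\<Sum>j\<in>K. (max 0 (R j))\<^sup>2) + real (card K) * D\<^sup>2"
proof -
  define r where "r j = c j - (\<Sum>k\<in>K. rm_of K R k * c k)" for j
  have r: "(r j)\<^sup>2 \<le> D\<^sup>2" if "j \<in> K" for j
  proof -
    have "\<bar>r j\<bar> \<le> \<bar>D\<bar>"
      using convex_comb_regret_abs_le[OF fin rm_of_distribution[OF fin ne, of R] rng that]
      unfolding r_def by linarith
    then show ?thesis by (simp add: abs_le_square_iff)
  qed
  have "(\<Sum>j\<in>K. (max 0 (R j + r j))\<^sup>2) \<le> (\<Sum>j\<in>K. (max 0 (R j) + r j)\<^sup>2)"
    by (intro sum_mono max0_add_square_le)
  also have "\<dots> = (\<Sum>j\<in>K. (max 0 (R j))\<^sup>2) + 2 * (\<Sum>j\<in>K. max 0 (R j) * r j) + (\<Sum>j\<in>K. (r j)\<^sup>2)"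
    unfolding power2_sum sum.distrib sum_distrib_left by (simp add: mult.assoc)
  also have "(\<Sum>j\<in>K. max 0 (R j) * r j) = 0"
    unfolding r_def by (rule rm_of_blackwell[OF fin])
  also have "(\<Sum>j\<in>K. (r j)\<^sup>2) \<le> (\<Sum>j\<in>K. D\<^sup>2)"
    using r by (rule sum_mono)
  finally show ?thesis by (simp add: r_def)
qed

lemma rm_cumulative_regret_le:
  fixes R c :: "nat \<Rightarrow> 'k \<Rightarrow> real"
  assumes fin: "finite K" and ne: "K \<noteq> {}"
    and R0: "\<forall>j\<in>K. R 0 j = 0"
    and step: "\<forall>t<T. \<forall>j\<in>K. R (Suc t) j = R t j + (c t j - (\<Sum>k\<in>K. rm_of K (R t) k * c t k))"
    and rng: "\<forall>t<T. \<forall>j\<in>K. \<forall>k\<in>K. c t j - c t k \<le> D"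
    and D: "0 \<le> D"
    and j: "j \<in> K"
  shows "R T j \<le> D * sqrt (real (card K) * real T)"
proof -
  define potential where "potential t = (\<Sum>j\<in>K. (max 0 (R t j))\<^sup>2)" for t
  have growth: "t \<le> T \<Longrightarrow> potential t \<le> real t * real (card K) * D\<^sup>2" for t
  proof (induction t)
    case 0
    then show ?case using R0 by (simp add: potential_def)
  next
    case (Suc t)
    then have t: "t < T" by simp
    have "potential (Suc t) =
        (\<Sum>j\<in>K. (max 0 (R t j + (c t j - (\<Sum>k\<in>K. rm_of K (R t) k * c t k))))\<^sup>2)"
      unfolding potential_def using step t by simp
    also have "\<dots> \<le> potential t + real (card K) * D\<^sup>2"
      unfolding potential_def using rm_potential_step[OF fin ne] rng t by blast
    finally show ?case using Suc t by (simp add: distrib_right)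
  qed
  have "(max 0 (R T j))\<^sup>2 \<le> potential T"
    unfolding potential_def using j fin by (intro member_le_sum) auto
  also have "\<dots> \<le> D\<^sup>2 * (real (card K) * real T)"
    using growth[of T] by (simp add: mult_ac)
  also have "\<dots> = (D * sqrt (real (card K) * real T))\<^sup>2"
    by (simp add: power_mult_distrib)
  finally have "max 0 (R T j) \<le> D * sqrt (real (card K) * real T)"
    by (rule power2_le_imp_le) (use D in simp)
  then show ?thesis by simp
qed

lemma rm_regret_le:
  assumes fin: "finite K" and ne: "K \<noteq> {}"
    and lin: "\<And>t p. l t p = (\<Sum>k\<in>K. p k * u t k)"
    and rng: "\<forall>t<T. \<forall>j\<in>K. \<forall>k\<in>K. u t j - u t k \<le> D" and D: "0 \<le> D"
    and j: "j \<in> K"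
  shows "(\<Sum>t<T. u t j - l t (rm K l t)) \<le> D * sqrt (real (card K) * real T)"
proof -
  let ?R = "rm_cumreg K l"
  have unit: "l t (unitv k) = u t k" if "k \<in> K" for t k
  proof -
    have "l t (unitv k) = (\<Sum>i\<in>K. if i = k then u t i else 0)"
      unfolding lin unitv_def by (rule sum.cong) auto
    then show ?thesis using that fin by simp
  qed
  have step: "?R (Suc t) k = ?R t k + (u t k - (\<Sum>i\<in>K. rm_of K (?R t) i * u t i))" if "k \<in> K" for t k
    using unit[OF that] by (simp add: lin)
  have "(\<Sum>t<T. u t j - l t (rm K l t)) = (\<Sum>t<T. ?R (Suc t) j - ?R t j)"
    using step[OF j] by (simp add: rm_def lin)
  also have "\<dots> = ?R T j"
    using sum_lessThan_telescope[of "\<lambda>t. ?R t j" T] by (simp del: rm_cumreg.simps(2))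
  also have "\<dots> \<le> D * sqrt (real (card K) * real T)"
    using step rng by (intro rm_cumulative_regret_le[OF fin ne _ _ _ D j]) auto
  finally show ?thesis .
qed

section \<open>Convex combinations in co \<Phi>\<close>

lemma phi_convex_comb:
  assumes "(\<Sum>f\<in>F. w f) = 1"
  shows "phi IS A par I (\<lambda>s. \<Sum>f\<in>F. w f * v f s) r c = (\<Sum>f\<in>F. w f * phi IS A par I (v f) r c)"
proof -
  define \<alpha> where "\<alpha> = phi IS A par I (\<lambda>_. 0) r c"
  define \<beta> where "\<beta> = (if r \<in> seqs IS A \<and> c \<in> seqs IS A \<and> \<not> (\<not> seq_ge IS par c I \<and> r = c)
                        \<and> c = par I \<and> seq_ge IS par r I then 1 else 0 :: real)"
  have affine: "phi IS A par I y r c = \<alpha> + \<beta> * y r" for y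
    by (simp add: \<alpha>_def \<beta>_def phi_def)
  have "(\<Sum>f\<in>F. w f * (\<alpha> + \<beta> * v f r)) = (\<Sum>f\<in>F. w f) * \<alpha> + \<beta> * (\<Sum>f\<in>F. w f * v f r)"
    by (simp add: distrib_left sum.distrib sum_distrib_right sum_distrib_left mult_ac)
  then show ?thesis
    unfolding affine using assms by simp
qed

lemma convex_comb_in_coPhi:
  assumes F: "finite F" and w: "\<forall>f\<in>F. 0 \<le> w f \<and> M f \<in> Phi IS A par" and w1: "(\<Sum>f\<in>F. w f) = 1"
  shows "(\<lambda>r c. \<Sum>f\<in>F. w f * M f r c) \<in> coPhi IS A par"
proof -
  obtain h where h: "bij_betw h {..<card F} F"
    using ex_bij_betw_nat_finite[OF F] by (auto simp: lessThan_atLeast0)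
  have reindex: "(\<Sum>k<card F. g (h k)) = (\<Sum>f\<in>F. g f)" for g :: "_ \<Rightarrow> real"
    using sum.reindex_bij_betw[OF h] .
  have "k < card F \<Longrightarrow> h k \<in> F" for k
    using h by (auto simp: bij_betw_def)
  then show ?thesis
    unfolding coPhi_def using reindex[of w] reindex[of "\<lambda>f. w f * M f _ _"] w w1
    by (intro CollectI exI[of _ "card F"] exI[of _ "\<lambda>k. w (h k)"] exI[of _ "\<lambda>k. M (h k)"]) auto
qed

lemma Lval_convex_comb:
  "finite S \<Longrightarrow> Lval IS A G (\<lambda>r c. \<Sum>k\<in>S. w k * M k r c) = (\<Sum>k\<in>S. w k * Lval IS A G (M k))"
  unfolding Lval_def by (simp add: sum_distrib_left sum.swap[of _ S] mult_ac)

lemma regret_convex_comb: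
  assumes "finite S" and "(\<Sum>k\<in>S. w k) = 1"
  shows "(\<Sum>t<T. Lval IS A (G t) (\<lambda>r c. \<Sum>k\<in>S. w k * M k r c) - Lval IS A (G t) (P t)) =
         (\<Sum>k\<in>S. w k * (\<Sum>t<T. Lval IS A (G t) (M k) - Lval IS A (G t) (P t)))"
proof -
  have step: "Lval IS A (G t) (\<lambda>r c. \<Sum>k\<in>S. w k * M k r c) - Lval IS A (G t) (P t) =
      (\<Sum>k\<in>S. w k * (Lval IS A (G t) (M k) - Lval IS A (G t) (P t)))" for t
  proof -
    have "(\<Sum>k\<in>S. w k * (Lval IS A (G t) (M k) - Lval IS A (G t) (P t))) =
        (\<Sum>k\<in>S. w k * Lval IS A (G t) (M k)) - (\<Sum>k\<in>S. w k) * Lval IS A (G t) (P t)"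
      by (simp add: right_diff_distrib sum_subtractf sum_distrib_right)
    then show ?thesis using assms by (simp add: Lval_convex_comb)
  qed
  show ?thesis
    unfolding step by (simp add: sum_distrib_left sum.swap[of _ S])
qed

section \<open>Tree-form decision structure\<close>

locale tree_form =
  fixes IS :: "'i set" and A :: "'i \<Rightarrow> 'a set" and par :: "'i \<Rightarrow> ('i \<times> 'a) option"
  assumes tfdp: "tfdp IS A par"
begin

abbreviation precedes :: "'i \<Rightarrow> 'i \<Rightarrow> bool" (infix \<open>\<sqsubset>\<close> 50)
  where "I \<sqsubset> J \<equiv> prec IS par I J"

lemma finite_IS: "finite IS"
  using tfdp by (simp add: tfdp_def)

lemma finite_A: "I \<in> IS \<Longrightarrow> finite (A I)"
  using tfdp by (simp add: tfdp_def)

lemma A_nonempty: "I \<in> IS \<Longrightarrow> A I \<noteq> {}"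
  using tfdp by (simp add: tfdp_def)

lemma par_valid: "I \<in> IS \<Longrightarrow> par I = Some (J, a) \<Longrightarrow> J \<in> IS \<and> a \<in> A J"
  using tfdp by (simp add: tfdp_def)

lemma succ_rel_subset: "succ_rel IS par \<subseteq> IS \<times> IS"
  using par_valid by (auto simp: succ_rel_def)

lemma wf_succ_rel: "wf (succ_rel IS par)"
proof (rule finite_acyclic_wf)
  show "finite (succ_rel IS par)"
    using finite_subset[OF succ_rel_subset] finite_IS by blast
  show "acyclic (succ_rel IS par)"
    using tfdp by (simp add: tfdp_def)
qed

lemma prec_in_IS: "I \<sqsubset> J \<Longrightarrow> I \<in> IS \<and> J \<in> IS"
  unfolding prec_def using trancl_subset_Sigma[OF succ_rel_subset] by blast

lemma prec_irrefl: "\<not> I \<sqsubset> I"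
proof -
  have "acyclic (succ_rel IS par)" using tfdp by (simp add: tfdp_def)
  then show ?thesis unfolding prec_def acyclic_def by blast
qed

lemma prec_trans: "I \<sqsubset> J \<Longrightarrow> J \<sqsubset> K \<Longrightarrow> I \<sqsubset> K"
  unfolding prec_def by (rule trancl_trans)

lemma prec_par_iff:
  assumes "J \<in> IS" and "par J = Some (L, d)"
  shows "K \<sqsubset> J \<longleftrightarrow> K = L \<or> K \<sqsubset> L"
proof
  assume "K \<sqsubset> J"
  then have "(K, J) \<in> (succ_rel IS par)\<^sup>+" by (simp add: prec_def)
  then show "K = L \<or> K \<sqsubset> L"
    by (cases rule: tranclE) (use assms in \<open>auto simp: succ_rel_def prec_def\<close>)
next
  assume "K = L \<or> K \<sqsubset> L"
  moreover have "(L, J) \<in> succ_rel IS par" using assms by (simp add: succ_rel_def)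
  ultimately show "K \<sqsubset> J" unfolding prec_def by auto
qed

lemma prec_parent: "J \<in> IS \<Longrightarrow> par J = Some (L, d) \<Longrightarrow> L \<sqsubset> J"
  using prec_par_iff by blast

lemma not_prec_root: "par J = None \<Longrightarrow> \<not> K \<sqsubset> J"
proof
  assume root: "par J = None" and "K \<sqsubset> J"
  then have "(K, J) \<in> (succ_rel IS par)\<^sup>+" by (simp add: prec_def)
  then show False
    by (cases rule: tranclE) (use root in \<open>auto simp: succ_rel_def\<close>)
qed

definition path_to :: "'i \<Rightarrow> ('i \<times> 'a) set" where
  "path_to J = {s. \<exists>K. (K = J \<or> K \<sqsubset> J) \<and> par K = Some s}"

lemma path_seqs_eq: "path_seqs IS par J b = insert (J, b) (path_to J)"
  by (simp add: path_seqs_def path_to_def)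

lemma path_to_root: "par J = None \<Longrightarrow> path_to J = {}"
  using not_prec_root by (auto simp: path_to_def)

lemma path_to_par: "J \<in> IS \<Longrightarrow> par J = Some (L, d) \<Longrightarrow> path_to J = path_seqs IS par L d"
  unfolding path_seqs_eq path_to_def using prec_par_iff by auto

lemma path_to_prec:
  assumes "J \<in> IS" and "(K, c) \<in> path_to J"
  shows "K \<sqsubset> J \<and> c \<in> A K"
proof -
  obtain K' where K': "K' = J \<or> K' \<sqsubset> J" "par K' = Some (K, c)"
    using assms(2) by (auto simp: path_to_def)
  then have "K' \<in> IS" using assms(1) prec_in_IS by blast
  then have "K \<sqsubset> K'" "c \<in> A K" using K'(2) prec_parent par_valid by blast+
  then show ?thesis using K'(1) prec_trans by blast
qed

lemma path_to_unique:
  "J \<in> IS \<Longrightarrow> (K, c) \<in> path_to J \<Longrightarrow> (K, c') \<in> path_to J \<Longrightarrow> c = c'"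
proof (induction J rule: wf_induct_rule[OF wf_succ_rel])
  case (1 J)
  show ?case
  proof (cases "par J")
    case None
    then show ?thesis using 1(3) path_to_root by simp
  next
    case (Some p)
    obtain L d where p: "p = (L, d)" by fastforce
    have L: "L \<in> IS" "(L, J) \<in> succ_rel IS par"
      using par_valid[OF 1(2)] 1(2) Some p by (auto simp: succ_rel_def)
    have path: "path_to J = insert (L, d) (path_to L)"
      using path_to_par[OF 1(2)] Some p path_seqs_eq by simp
    show ?thesis
    proof (cases "K = L")
      case True
      have "(L, e) \<notin> path_to L" for e
        using path_to_prec[OF L(1)] prec_irrefl by blast
      then show ?thesis using 1(3,4) path True by auto
    next
      case False
      then have "(K, c) \<in> path_to L" "(K, c') \<in> path_to L" using 1(3,4) path by auto
      then show ?thesis using 1(1)[OF L(2) L(1)] by blast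
    qed
  qed
qed

lemma path_seqs_cases:
  assumes "J \<in> IS" and "(K, c) \<in> path_seqs IS par J b"
  shows "(K = J \<and> c = b) \<or> K \<sqsubset> J"
  using assms path_to_prec[OF assms(1)] by (auto simp: path_seqs_eq)

lemma path_seqs_valid:
  assumes "J \<in> IS" and "b \<in> A J" and "(K, c) \<in> path_seqs IS par J b"
  shows "K \<in> IS \<and> c \<in> A K"
proof (cases "(K, c) = (J, b)")
  case False
  then have "(K, c) \<in> path_to J" using assms(3) by (auto simp: path_seqs_eq)
  then have "K \<sqsubset> J \<and> c \<in> A K" using assms(1) path_to_prec by blast
  then show ?thesis using prec_in_IS by blast
qed (use assms in simp)

lemma path_seqs_unique:
  assumes "J \<in> IS" and "(K, c) \<in> path_seqs IS par J b" and "(K, c') \<in> path_seqs IS par J b"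
  shows "c = c'"
proof -
  have "(K, e) \<in> path_to J \<Longrightarrow> K \<noteq> J" for e
    using path_to_prec[OF assms(1)] prec_irrefl by blast
  then show ?thesis
    using assms path_to_unique[OF assms(1)] by (auto simp: path_seqs_eq)
qed

lemma finite_path_seqs: "J \<in> IS \<Longrightarrow> finite (path_seqs IS par J b)"
proof -
  assume J: "J \<in> IS"
  have "path_to J \<subseteq> Sigma IS A" using path_to_prec[OF J] prec_in_IS by fast
  moreover have "finite (Sigma IS A)" using finite_IS finite_A by auto
  ultimately show ?thesis by (simp add: path_seqs_eq finite_subset)
qed

section \<open>Sequence-form strategies\<close>

abbreviation subtree :: "'i \<Rightarrow> 'i set"
  where "subtree Ih \<equiv> subI IS par Ih"

abbreviation seqs_sub :: "'i \<Rightarrow> ('i \<times> 'a) option set"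
  where "seqs_sub Ih \<equiv> seqs_below IS A par Ih"

lemma subtree_IS: "J \<in> subtree Ih \<Longrightarrow> J \<in> IS"
  by (simp add: subI_def)

lemma root_in_subtree: "Ih \<in> IS \<Longrightarrow> Ih \<in> subtree Ih"
  by (simp add: subI_def)

lemma subtree_prec_closed: "K \<in> subtree Ih \<Longrightarrow> K \<sqsubset> K' \<Longrightarrow> K' \<in> subtree Ih"
  unfolding subI_def using prec_in_IS prec_trans by blast

lemma finite_subtree: "finite (subtree Ih)"
  using finite_IS by (simp add: subI_def)

lemma finite_Sigma_subtree: "finite (Sigma (subtree Ih) A)"
  using finite_subtree finite_A subtree_IS by auto

lemma mem_seqs_sub_iff: "s \<in> seqs_sub Ih \<longleftrightarrow> (\<exists>J b. s = Some (J, b) \<and> J \<in> subtree Ih \<and> b \<in> A J)"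
  unfolding seqs_below_def seqs_def seq_ge_def subI_def by auto

lemma seqs_sub_eq: "seqs_sub Ih = Some ` Sigma (subtree Ih) A"
  using mem_seqs_sub_iff by fastforce

lemma finite_seqs_sub: "finite (seqs_sub Ih)"
  using finite_Sigma_subtree seqs_sub_eq by simp

lemma subtree_parent:
  assumes "J \<in> subtree Ih" and "J \<noteq> Ih"
  obtains L d where "par J = Some (L, d)" "L \<in> subtree Ih" "d \<in> A L" "L \<sqsubset> J"
proof -
  have "Ih \<sqsubset> J" "J \<in> IS" using assms by (auto simp: subI_def)
  then obtain L d where Ld: "par J = Some (L, d)"
    using not_prec_root by (cases "par J") auto
  have "Ih = L \<or> Ih \<sqsubset> L" using prec_par_iff[OF \<open>J \<in> IS\<close> Ld] \<open>Ih \<sqsubset> J\<close> by blast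
  moreover have "L \<in> IS \<and> d \<in> A L" using par_valid[OF \<open>J \<in> IS\<close> Ld] .
  ultimately show ?thesis
    using that Ld prec_parent[OF \<open>J \<in> IS\<close> Ld] by (auto simp: subI_def)
qed

definition path_in :: "'i \<Rightarrow> 'i \<Rightarrow> 'a \<Rightarrow> ('i \<times> 'a) set" where
  "path_in Ih J b = {(K, c) \<in> path_seqs IS par J b. K \<in> subtree Ih}"

lemma finite_path_in: "J \<in> IS \<Longrightarrow> finite (path_in Ih J b)"
  unfolding path_in_def by (rule finite_subset[OF _ finite_path_seqs[of J b]]) auto

lemma path_in_subset: "J \<in> IS \<Longrightarrow> b \<in> A J \<Longrightarrow> path_in Ih J b \<subseteq> Sigma (subtree Ih) A"
  using path_seqs_valid unfolding path_in_def by blast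

lemma path_in_cases: "J \<in> IS \<Longrightarrow> (K, c) \<in> path_in Ih J b \<Longrightarrow> (K = J \<and> c = b) \<or> K \<sqsubset> J"
  using path_seqs_cases unfolding path_in_def by blast

lemma path_in_root: "Ih \<in> IS \<Longrightarrow> path_in Ih Ih b = {(Ih, b)}"
proof -
  assume Ih: "Ih \<in> IS"
  have "(K, c) = (Ih, b)" if "(K, c) \<in> path_in Ih Ih b" for K c
    using that path_in_cases[OF Ih] prec_irrefl prec_trans unfolding path_in_def subI_def by blast
  moreover have "(Ih, b) \<in> path_in Ih Ih b"
    using Ih by (simp add: path_in_def path_seqs_eq subI_def)
  ultimately show ?thesis by fast
qed

lemma path_in_par:
  assumes J: "J \<in> subtree Ih" "par J = Some (L, d)" "J \<noteq> Ih"
  shows "path_in Ih J b = insert (J, b) (path_in Ih L d)" and "(J, b) \<notin> path_in Ih L d"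
proof -
  have JIS: "J \<in> IS" using J subtree_IS by blast
  show "path_in Ih J b = insert (J, b) (path_in Ih L d)"
    using path_to_par[OF JIS J(2)] J(1) unfolding path_in_def path_seqs_eq[of J b] by auto
  show "(J, b) \<notin> path_in Ih L d"
  proof
    assume "(J, b) \<in> path_in Ih L d"
    moreover have "L \<in> IS" using par_valid[OF JIS J(2)] by blast
    ultimately have "J = L \<or> J \<sqsubset> L" using path_in_cases by blast
    then show False using prec_parent[OF JIS J(2)] prec_irrefl prec_trans by blast
  qed
qed

definition seqform :: "'i \<Rightarrow> ('i \<Rightarrow> 'a \<Rightarrow> real) \<Rightarrow> ('i \<times> 'a) option \<Rightarrow> real" where
  "seqform Ih y s =
     (if s \<in> seqs_sub Ih then (\<Prod>(K, c)\<in>path_in Ih (fst (the s)) (snd (the s)). y K c) else 0)"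

lemma cfr_out_eq_seqform: "cfr_out IS A par Ih l t = seqform Ih (cfr_local IS A par Ih l t)"
  by (rule ext) (simp add: cfr_out_def seqform_def path_in_def)

lemma seqform_Some:
  "J \<in> subtree Ih \<Longrightarrow> b \<in> A J \<Longrightarrow> seqform Ih y (Some (J, b)) = (\<Prod>(K, c)\<in>path_in Ih J b. y K c)"
  using mem_seqs_sub_iff by (simp add: seqform_def)

text \<open>The sequence \<open>\<sigma>(Ih)\<close> lies outside \<open>\<Sigma>\<^sub>I\<^sub>h\<close>; for vectors of \<open>Q\<^sub>I\<^sub>h\<close> its role
  is played by the constant 1.\<close>
definition parent_mass :: "'i \<Rightarrow> (('i \<times> 'a) option \<Rightarrow> real) \<Rightarrow> 'i \<Rightarrow> real" where
  "parent_mass Ih q K = (if K = Ih then 1 else q (par K))"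

lemma seqform_rec:
  assumes J: "J \<in> subtree Ih" "b \<in> A J"
  shows "seqform Ih y (Some (J, b)) = y J b * parent_mass Ih (seqform Ih y) J"
proof (cases "J = Ih")
  case True
  then show ?thesis using J path_in_root subtree_IS by (simp add: seqform_Some parent_mass_def)
next
  case False
  obtain L d where Ld: "par J = Some (L, d)" "L \<in> subtree Ih" "d \<in> A L"
    using subtree_parent[OF J(1) False] by blast
  have "seqform Ih y (Some (J, b)) = (\<Prod>(K, c)\<in>insert (J, b) (path_in Ih L d). y K c)"
    using J path_in_par[OF J(1) Ld(1) False] by (simp add: seqform_Some)
  also have "\<dots> = y J b * (\<Prod>(K, c)\<in>path_in Ih L d. y K c)"
    using path_in_par[OF J(1) Ld(1) False] finite_path_in[OF subtree_IS[OF Ld(2)]] by simp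
  also have "\<dots> = y J b * parent_mass Ih (seqform Ih y) J"
    using Ld False by (simp add: parent_mass_def seqform_Some)
  finally show ?thesis .
qed

definition behavioural :: "'i \<Rightarrow> ('i \<Rightarrow> 'a \<Rightarrow> real) \<Rightarrow> bool" where
  "behavioural Ih y \<longleftrightarrow> (\<forall>K\<in>subtree Ih. (\<forall>c\<in>A K. 0 \<le> y K c) \<and> (\<Sum>c\<in>A K. y K c) = 1)"

lemma seqform_nonneg:
  assumes y: "behavioural Ih y"
  shows "0 \<le> seqform Ih y s"
proof (cases "s \<in> seqs_sub Ih")
  case True
  then obtain J b where s: "s = Some (J, b)" "J \<in> subtree Ih" "b \<in> A J"
    using mem_seqs_sub_iff by blast
  have "0 \<le> (\<Prod>(K, c)\<in>path_in Ih J b. y K c)"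
    using path_in_subset[OF subtree_IS[OF s(2)] s(3)] y unfolding behavioural_def
    by (intro prod_nonneg) auto
  then show ?thesis using s by (simp add: seqform_Some)
qed (simp add: seqform_def)

lemma seqform_in_Qset:
  assumes Ih: "Ih \<in> IS" and y: "behavioural Ih y"
  shows "seqform Ih y \<in> Qset IS A par Ih"
proof -
  have root_mass: "(\<Sum>a\<in>A Ih. seqform Ih y (Some (Ih, a))) = 1"
    using y root_in_subtree[OF Ih] by (simp add: seqform_rec parent_mass_def behavioural_def)
  have flow: "seqform Ih y (par I') = (\<Sum>a\<in>A I'. seqform Ih y (Some (I', a)))"
    if "I' \<in> IS" "Ih \<sqsubset> I'" for I'
  proof -
    have I': "I' \<in> subtree Ih" "I' \<noteq> Ih" using that prec_irrefl by (auto simp: subI_def)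
    have "(\<Sum>a\<in>A I'. seqform Ih y (Some (I', a))) = (\<Sum>a\<in>A I'. y I' a) * parent_mass Ih (seqform Ih y) I'"
      using I' by (simp add: seqform_rec sum_distrib_right)
    also have "\<dots> = seqform Ih y (par I')"
      using y I' by (simp add: behavioural_def parent_mass_def)
    finally show ?thesis by simp
  qed
  have outside: "s \<notin> seqs_sub Ih \<Longrightarrow> seqform Ih y s = 0" for s
    by (simp add: seqform_def)
  show ?thesis
    unfolding Qset_def using outside root_mass flow seqform_nonneg[OF y] by blast
qed

lemma seqform_in_Piset:
  assumes Ih: "Ih \<in> IS" and y: "behavioural Ih y"
    and pure: "\<And>K c. K \<in> subtree Ih \<Longrightarrow> c \<in> A K \<Longrightarrow> y K c \<in> {0, 1}"
  shows "seqform Ih y \<in> Piset IS A par Ih"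
proof -
  have "seqform Ih y s \<in> {0, 1}" for s
  proof (cases "s \<in> seqs_sub Ih")
    case True
    then obtain J b where s: "s = Some (J, b)" "J \<in> subtree Ih" "b \<in> A J"
      using mem_seqs_sub_iff by blast
    have "(\<Prod>(K, c)\<in>path_in Ih J b. y K c) \<in> {0, 1}"
      using path_in_subset[OF subtree_IS[OF s(2)] s(3)] pure finite_path_in[OF subtree_IS[OF s(2)]]
      by (intro prod_in_01) auto
    then show ?thesis using s by (simp add: seqform_Some)
  qed (simp add: seqform_def)
  then show ?thesis using seqform_in_Qset[OF Ih y] by (simp add: Piset_def)
qed

text \<open>Kuhn's theorem: realisation equivalence of behavioural and mixed strategies.\<close>
lemma seqform_eq_mixture_of_pure:
  assumes Ih: "Ih \<in> IS" and y: "behavioural Ih y"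
  shows "seqform Ih y s = (\<Sum>f\<in>PiE (subtree Ih) A.
           (\<Prod>K\<in>subtree Ih. y K (f K)) * seqform Ih (\<lambda>K c. if f K = c then 1 else 0) s)"
proof (cases "s \<in> seqs_sub Ih")
  case True
  then obtain J b where s: "s = Some (J, b)" "J \<in> subtree Ih" "b \<in> A J"
    using mem_seqs_sub_iff by blast
  have JIS: "J \<in> IS" using s subtree_IS by blast
  have "c = c'" if "(K, c) \<in> path_in Ih J b" "(K, c') \<in> path_in Ih J b" for K c c'
    using that path_seqs_unique[OF JIS] unfolding path_in_def by blast
  then obtain h where h: "path_in Ih J b = (\<lambda>K. (K, h K)) ` fst ` path_in Ih J b"
    using functional_set_eq_graph by blast
  let ?D = "fst ` path_in Ih J b"
  have graph: "(\<Prod>(K, c)\<in>path_in Ih J b. g K c) = (\<Prod>K\<in>?D. g K (h K))" for g :: "'i \<Rightarrow> 'a \<Rightarrow> real"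
    by (subst h) (simp add: prod.reindex inj_on_def)
  have on_path: "(K, h K) \<in> path_in Ih J b" if "K \<in> ?D" for K
    using that by (subst h) blast
  have D: "?D \<subseteq> subtree Ih" "\<And>K. K \<in> ?D \<Longrightarrow> h K \<in> A K"
    using path_in_subset[OF JIS s(3)] on_path by force+
  have "(\<Sum>f\<in>PiE (subtree Ih) A. (\<Prod>K\<in>subtree Ih. y K (f K)) *
          seqform Ih (\<lambda>K c. if f K = c then 1 else 0) s)
      = (\<Sum>f\<in>PiE (subtree Ih) A. (\<Prod>K\<in>subtree Ih. y K (f K)) *
          (\<Prod>K\<in>?D. if f K = h K then 1 else 0))"
    using s by (simp add: seqform_Some graph)
  also have "\<dots> = (\<Prod>K\<in>?D. y K (h K))"
  proof (rule sum_PiE_prod_agree[OF finite_subtree D])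
    fix K assume "K \<in> subtree Ih"
    then show "finite (A K)" "(\<Sum>a\<in>A K. y K a) = 1"
      using y finite_A[OF subtree_IS] unfolding behavioural_def by blast+
  qed
  also have "\<dots> = seqform Ih y s"
    using s by (simp add: seqform_Some graph)
  finally show ?thesis ..
qed (simp add: seqform_def)

lemma phi_seqform_in_coPhi:
  assumes Ih: "Ih \<in> IS" and y: "behavioural Ih y"
  shows "phi IS A par Ih (seqform Ih y) \<in> coPhi IS A par"
proof -
  let ?F = "PiE (subtree Ih) A"
  define w where "w f = (\<Prod>K\<in>subtree Ih. y K (f K))" for f
  define pure where "pure f = (\<lambda>K c. if f K = c then 1 else 0 :: real)" for f :: "'i \<Rightarrow> 'a"
  have w1: "(\<Sum>f\<in>?F. w f) = 1"
  proof -
    have "(\<Sum>f\<in>?F. w f) = (\<Prod>K\<in>subtree Ih. \<Sum>a\<in>A K. y K a)"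
      unfolding w_def by (rule prod_sum_PiE[symmetric]) (use finite_subtree finite_A subtree_IS in auto)
    then show ?thesis using y by (simp add: behavioural_def)
  qed
  have "0 \<le> w f \<and> phi IS A par Ih (seqform Ih (pure f)) \<in> Phi IS A par" if f: "f \<in> ?F" for f
  proof
    show "0 \<le> w f"
      unfolding w_def using f y by (intro prod_nonneg) (auto simp: behavioural_def PiE_def)
    have "seqform Ih (pure f) \<in> Piset IS A par Ih"
      using f finite_A subtree_IS
      by (intro seqform_in_Piset[OF Ih]) (auto simp: behavioural_def pure_def PiE_def)
    then show "phi IS A par Ih (seqform Ih (pure f)) \<in> Phi IS A par"
      using Ih by (auto simp: Phi_def)
  qed
  then have "(\<lambda>r c. \<Sum>f\<in>?F. w f * phi IS A par Ih (seqform Ih (pure f)) r c) \<in> coPhi IS A par"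
    using finite_subtree finite_A subtree_IS
    by (intro convex_comb_in_coPhi[OF _ _ w1] finite_PiE) auto
  moreover have "seqform Ih y = (\<lambda>s. \<Sum>f\<in>?F. w f * seqform Ih (pure f) s)"
    using seqform_eq_mixture_of_pure[OF Ih y] by (simp add: w_def pure_def fun_eq_iff)
  moreover have "phi IS A par Ih (\<lambda>s. \<Sum>f\<in>?F. w f * seqform Ih (pure f) s) =
      (\<lambda>r c. \<Sum>f\<in>?F. w f * phi IS A par Ih (seqform Ih (pure f)) r c)"
    by (intro ext phi_convex_comb[OF w1])
  ultimately show ?thesis by simp
qed

section \<open>Counterfactual regret minimization\<close>

definition path_after :: "'i \<Rightarrow> 'i \<Rightarrow> 'a \<Rightarrow> 'i \<Rightarrow> ('i \<times> 'a) set" where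
  "path_after Ih J b K = {(K', c') \<in> path_in Ih J b. K \<sqsubset> K'}"

lemma finite_path_after: "J \<in> IS \<Longrightarrow> finite (path_after Ih J b K)"
  unfolding path_after_def by (rule finite_subset[OF _ finite_path_in]) auto

lemma path_after_self: "J \<in> IS \<Longrightarrow> path_after Ih J b J = {}"
  using path_in_cases prec_irrefl prec_trans unfolding path_after_def by blast

lemma path_after_par:
  assumes J: "J \<in> subtree Ih" "par J = Some (L, d)" "J \<noteq> Ih" and K: "(K, c) \<in> path_in Ih L d"
  shows "path_after Ih J b K = insert (J, b) (path_after Ih L d K)"
    and "(J, b) \<notin> path_after Ih L d K"
proof -
  have "J \<in> IS" using J(1) subtree_IS by blast
  then have "L \<in> IS" "L \<sqsubset> J" using par_valid prec_parent J(2) by blast+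
  then have "K \<sqsubset> J" using path_in_cases[OF \<open>L \<in> IS\<close> K] prec_trans by blast
  then show "path_after Ih J b K = insert (J, b) (path_after Ih L d K)"
    using path_in_par(1)[OF J] by (auto simp: path_after_def)
  show "(J, b) \<notin> path_after Ih L d K"
    using path_in_par(2)[OF J] by (auto simp: path_after_def)
qed

lemma seqform_diff_telescope:
  assumes Ih: "Ih \<in> IS"
  shows "J \<in> subtree Ih \<Longrightarrow> b \<in> A J \<Longrightarrow> \<pi> (Some (J, b)) - seqform Ih x (Some (J, b)) =
    (\<Sum>(K, c)\<in>path_in Ih J b. (\<pi> (Some (K, c)) - parent_mass Ih \<pi> K * x K c) *
        (\<Prod>(K', c')\<in>path_after Ih J b K. x K' c'))"
proof (induction J arbitrary: b rule: wf_induct_rule[OF wf_succ_rel])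
  case (1 J)
  let ?dev = "\<lambda>K c. \<pi> (Some (K, c)) - parent_mass Ih \<pi> K * x K c"
  have JIS: "J \<in> IS" using 1(2) subtree_IS by blast
  show ?case
  proof (cases "J = Ih")
    case True
    then show ?thesis
      using path_in_root[OF Ih] path_after_self[OF Ih] 1(2,3)
      by (simp add: seqform_rec parent_mass_def)
  next
    case False
    obtain L d where Ld: "par J = Some (L, d)" "L \<in> subtree Ih" "d \<in> A L"
      using subtree_parent[OF 1(2) False] by blast
    have LIS: "L \<in> IS" using Ld(2) subtree_IS by blast
    have IH: "\<pi> (Some (L, d)) - seqform Ih x (Some (L, d)) =
      (\<Sum>(K, c)\<in>path_in Ih L d. ?dev K c * (\<Prod>(K', c')\<in>path_after Ih L d K. x K' c'))"
      using 1(1) JIS Ld by (simp add: succ_rel_def)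
    note path = path_in_par[OF 1(2) Ld(1) False, of b]
    have "(\<Sum>(K, c)\<in>path_in Ih J b. ?dev K c * (\<Prod>(K', c')\<in>path_after Ih J b K. x K' c'))
       = ?dev J b + (\<Sum>(K, c)\<in>path_in Ih L d. ?dev K c * (\<Prod>(K', c')\<in>path_after Ih J b K. x K' c'))"
      using path finite_path_in[OF LIS] path_after_self[OF JIS] by simp
    also have "(\<Sum>(K, c)\<in>path_in Ih L d. ?dev K c * (\<Prod>(K', c')\<in>path_after Ih J b K. x K' c'))
       = x J b * (\<Sum>(K, c)\<in>path_in Ih L d. ?dev K c * (\<Prod>(K', c')\<in>path_after Ih L d K. x K' c'))"
      unfolding sum_distrib_left
      using path_after_par[OF 1(2) Ld(1) False] finite_path_after[OF LIS]
      by (intro sum.cong refl) (auto simp: algebra_simps)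
    finally show ?thesis
      using 1(2,3) Ld False IH by (simp add: seqform_rec parent_mass_def algebra_simps)
  qed
qed

lemma cfv_eq_sum_subtree:
  assumes Ih: "Ih \<in> IS" and K: "K \<in> subtree Ih"
    and g: "\<And>s. g s = (if s \<in> seqs_sub Ih then gg s else 0)"
  shows "cfv IS A par g x K c =
    (\<Sum>(J, b)\<in>{(J, b) \<in> Sigma (subtree Ih) A. (K, c) \<in> path_in Ih J b}.
       gg (Some (J, b)) * (\<Prod>(K', c')\<in>path_after Ih J b K. x K' c'))"
proof -
  have S: "{(J, b). J \<in> IS \<and> b \<in> A J \<and> (K, c) \<in> path_seqs IS par J b} =
           {(J, b) \<in> Sigma (subtree Ih) A. (K, c) \<in> path_in Ih J b}"
  proof safe
    fix J b assume J: "J \<in> IS" "b \<in> A J" "(K, c) \<in> path_seqs IS par J b"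
    then have "K = J \<or> K \<sqsubset> J" using path_seqs_cases by blast
    then have "J \<in> subtree Ih" using K subtree_prec_closed by blast
    then show "J \<in> subtree Ih" "(K, c) \<in> path_in Ih J b" using J K by (auto simp: path_in_def)
  qed (auto simp: path_in_def subtree_IS)
  have after: "{(K', c') \<in> path_seqs IS par J b. K \<sqsubset> K'} = path_after Ih J b K" for J b
    using K subtree_prec_closed by (auto simp: path_after_def path_in_def)
  show ?thesis
    unfolding cfv_def S by (rule sum.cong[OF refl]) (auto simp: g after mem_seqs_sub_iff)
qed

lemma regret_decomposition:
  assumes Ih: "Ih \<in> IS"
    and g: "\<And>s. g s = (if s \<in> seqs_sub Ih then gg s else 0)"
  shows "(\<Sum>s\<in>seqs_sub Ih. gg s * (\<pi> s - seqform Ih x s)) =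
    (\<Sum>(K, c)\<in>Sigma (subtree Ih) A.
       (\<pi> (Some (K, c)) - parent_mass Ih \<pi> K * x K c) * cfv IS A par g x K c)"
proof -
  let ?S = "Sigma (subtree Ih) A"
  let ?dev = "\<lambda>K c. \<pi> (Some (K, c)) - parent_mass Ih \<pi> K * x K c"
  let ?after = "\<lambda>J b K. \<Prod>(K', c')\<in>path_after Ih J b K. x K' c'"
  let ?term = "\<lambda>z y. gg (Some z) * (?dev (fst y) (snd y) * ?after (fst z) (snd z) (fst y))"
  have "(\<Sum>s\<in>seqs_sub Ih. gg s * (\<pi> s - seqform Ih x s)) =
        (\<Sum>(J, b)\<in>?S. gg (Some (J, b)) * (\<pi> (Some (J, b)) - seqform Ih x (Some (J, b))))"
    unfolding seqs_sub_eq by (subst sum.reindex) (auto simp: case_prod_beta)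
  also have "\<dots> = (\<Sum>z\<in>?S. \<Sum>y\<in>{y \<in> ?S. y \<in> path_in Ih (fst z) (snd z)}. ?term z y)"
  proof (rule sum.cong[OF refl], clarify)
    fix J b assume Jb: "J \<in> subtree Ih" "b \<in> A J"
    have "{y \<in> ?S. y \<in> path_in Ih J b} = path_in Ih J b"
      using path_in_subset[OF subtree_IS[OF Jb(1)] Jb(2)] by blast
    then show "gg (Some (J, b)) * (\<pi> (Some (J, b)) - seqform Ih x (Some (J, b))) =
      (\<Sum>y\<in>{y \<in> ?S. y \<in> path_in Ih (fst (J, b)) (snd (J, b))}. ?term (J, b) y)"
      unfolding seqform_diff_telescope[OF Ih Jb] by (simp add: sum_distrib_left case_prod_beta)
  qed
  also have "\<dots> = (\<Sum>y\<in>?S. \<Sum>z\<in>{z \<in> ?S. y \<in> path_in Ih (fst z) (snd z)}. ?term z y)"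
    by (rule sum.swap_restrict[OF finite_Sigma_subtree finite_Sigma_subtree])
  also have "\<dots> = (\<Sum>(K, c)\<in>?S. ?dev K c * cfv IS A par g x K c)"
  proof (rule sum.cong[OF refl], clarify)
    fix K c assume Kc: "K \<in> subtree Ih" "c \<in> A K"
    show "(\<Sum>z\<in>{z \<in> ?S. (K, c) \<in> path_in Ih (fst z) (snd z)}. ?term z (K, c)) =
          ?dev K c * cfv IS A par g x K c"
      unfolding cfv_eq_sum_subtree[OF Ih Kc(1) g] sum_distrib_left
      by (rule sum.cong) (auto simp: case_prod_beta)
  qed
  finally show ?thesis .
qed

lemma regret_decomposition_behavioural:
  assumes Ih: "Ih \<in> IS" and g: "\<And>s. g s = (if s \<in> seqs_sub Ih then gg s else 0)"
  shows "(\<Sum>s\<in>seqs_sub Ih. gg s * (seqform Ih y s - seqform Ih x s)) =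
    (\<Sum>K\<in>subtree Ih. \<Sum>c\<in>A K.
       parent_mass Ih (seqform Ih y) K * (y K c - x K c) * cfv IS A par g x K c)"
proof -
  have "(\<Sum>s\<in>seqs_sub Ih. gg s * (seqform Ih y s - seqform Ih x s)) =
    (\<Sum>(K, c)\<in>Sigma (subtree Ih) A.
       (seqform Ih y (Some (K, c)) - parent_mass Ih (seqform Ih y) K * x K c) * cfv IS A par g x K c)"
    by (rule regret_decomposition[OF Ih g])
  also have "\<dots> = (\<Sum>(K, c)\<in>Sigma (subtree Ih) A.
       parent_mass Ih (seqform Ih y) K * (y K c - x K c) * cfv IS A par g x K c)"
    by (intro sum.cong refl) (auto simp: seqform_rec algebra_simps)
  also have "\<dots> = (\<Sum>K\<in>subtree Ih. \<Sum>c\<in>A K.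
       parent_mass Ih (seqform Ih y) K * (y K c - x K c) * cfv IS A par g x K c)"
    by (rule sum.Sigma[symmetric]) (use finite_subtree finite_A subtree_IS in auto)
  finally show ?thesis .
qed

text \<open>The behavioural strategy that steers towards \<open>K\<close>, plays \<open>a\<close> there,
  and follows \<open>x\<close> everywhere else.\<close>
definition deviate :: "'i \<Rightarrow> 'a \<Rightarrow> ('i \<Rightarrow> 'a \<Rightarrow> real) \<Rightarrow> 'i \<Rightarrow> 'a \<Rightarrow> real" where
  "deviate K a x K' c =
     (if K' = K then (if c = a then 1 else 0)
      else if \<exists>c'. (K', c') \<in> path_to K then (if (K', c) \<in> path_to K then 1 else 0)
      else x K' c)"

lemma behavioural_deviate:
  assumes K: "K \<in> subtree Ih" and a: "a \<in> A K" and x: "behavioural Ih x"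
  shows "behavioural Ih (deviate K a x)"
  unfolding behavioural_def
proof
  fix K' assume K': "K' \<in> subtree Ih"
  have KIS: "K \<in> IS" "K' \<in> IS" using K K' subtree_IS by auto
  show "(\<forall>c\<in>A K'. 0 \<le> deviate K a x K' c) \<and> (\<Sum>c\<in>A K'. deviate K a x K' c) = 1"
  proof (cases "K' \<noteq> K \<and> (\<exists>c'. (K', c') \<in> path_to K)")
    case True
    then obtain c0 where c0: "(K', c0) \<in> path_to K" and ne: "K' \<noteq> K" by blast
    have "c0 \<in> A K'" using path_to_prec[OF KIS(1) c0] by blast
    moreover have "(K', c) \<in> path_to K \<longleftrightarrow> c = c0" for c
      using path_to_unique[OF KIS(1) c0] c0 by blast
    then have "deviate K a x K' c = (if c = c0 then 1 else 0)" for c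
      using ne by (simp add: deviate_def)
    ultimately show ?thesis using finite_A[OF KIS(2)] by simp
  next
    case False
    show ?thesis
    proof (cases "K' = K")
      case True
      then have "deviate K a x K' c = (if c = a then 1 else 0)" for c
        by (simp add: deviate_def)
      then show ?thesis using True a finite_A[OF KIS(1)] by simp
    next
      case ne: False
      then have "deviate K a x K' = x K'"
        using False by (simp add: deviate_def fun_eq_iff)
      then show ?thesis using x K' by (simp add: behavioural_def)
    qed
  qed
qed

lemma parent_mass_deviate_self:
  assumes K: "K \<in> subtree Ih"
  shows "parent_mass Ih (seqform Ih (deviate K a x)) K = 1"
proof (cases "K = Ih")
  case False
  obtain L d where Ld: "par K = Some (L, d)" "L \<in> subtree Ih" "d \<in> A L"
    using subtree_parent[OF K False] by blast
  have KIS: "K \<in> IS" using K subtree_IS by blast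
  have "deviate K a x K' c = 1" if "(K', c) \<in> path_in Ih L d" for K' c
  proof -
    have on_path: "(K', c) \<in> path_to K"
      using that path_to_par[OF KIS Ld(1)] by (simp add: path_in_def)
    then have "K' \<noteq> K" using path_to_prec[OF KIS] prec_irrefl by blast
    then show ?thesis using on_path by (auto simp: deviate_def)
  qed
  then have "(\<Prod>(K', c)\<in>path_in Ih L d. deviate K a x K' c) = 1"
    by (intro prod.neutral) auto
  then show ?thesis
    using False Ld by (simp add: parent_mass_def seqform_Some)
qed (simp add: parent_mass_def)

lemma parent_mass_deviate_ancestor:
  assumes K: "K \<in> subtree Ih" and K': "K' \<in> subtree Ih" and anc: "(K', c0) \<in> path_to K"
  shows "parent_mass Ih (seqform Ih (deviate K a x)) K' = parent_mass Ih (seqform Ih (deviate K b x)) K'"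
proof (cases "K' = Ih")
  case False
  obtain L d where Ld: "par K' = Some (L, d)" "L \<in> subtree Ih" "d \<in> A L"
    using subtree_parent[OF K' False] by blast
  have KIS: "K \<in> IS" and K'IS: "K' \<in> IS" and LIS: "L \<in> IS"
    using K K' Ld(2) subtree_IS by auto
  have "K' \<sqsubset> K" using path_to_prec[OF KIS anc] by blast
  have "deviate K a x K'' c'' = deviate K b x K'' c''" if "(K'', c'') \<in> path_in Ih L d" for K'' c''
  proof -
    have "K'' = L \<or> K'' \<sqsubset> L" using path_in_cases[OF LIS that] by blast
    then have "K'' \<sqsubset> K'" using prec_par_iff[OF K'IS Ld(1)] by blast
    then have "K'' \<noteq> K" using \<open>K' \<sqsubset> K\<close> prec_trans prec_irrefl by blast
    then show ?thesis by (simp add: deviate_def)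
  qed
  then have "(\<Prod>(K'', c'')\<in>path_in Ih L d. deviate K a x K'' c'') =
             (\<Prod>(K'', c'')\<in>path_in Ih L d. deviate K b x K'' c'')"
    by (intro prod.cong refl) auto
  then show ?thesis
    using False Ld by (simp add: parent_mass_def seqform_Some)
qed (simp add: parent_mass_def)

lemma sum_deviate_weighted_diff:
  assumes K: "K \<in> subtree Ih" and a: "a \<in> A K" and b: "b \<in> A K" and K': "K' \<in> subtree Ih"
  shows "(\<Sum>c\<in>A K'. parent_mass Ih (seqform Ih (deviate K a x)) K' * (deviate K a x K' c - x K' c) * v K' c
                   - parent_mass Ih (seqform Ih (deviate K b x)) K' * (deviate K b x K' c - x K' c) * v K' c)
         = (if K' = K then v K a - v K b else 0)"
proof -
  let ?term = "\<lambda>y c. parent_mass Ih (seqform Ih y) K' * (y K' c - x K' c) * v K' c"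
  show ?thesis
  proof (cases "K' = K")
    case True
    have KIS: "K \<in> IS" using K subtree_IS by blast
    have "(\<Sum>c\<in>A K'. ?term (deviate K a x) c - ?term (deviate K b x) c) =
          (\<Sum>c\<in>A K. (if c = a then v K c else 0) - (if c = b then v K c else 0))"
      using True parent_mass_deviate_self[OF K]
      by (intro sum.cong refl) (simp_all add: deviate_def algebra_simps)
    also have "\<dots> = v K a - v K b"
      using a b finite_A[OF KIS] by (simp add: sum_subtractf)
    finally show ?thesis using True by simp
  next
    case False
    have same: "?term (deviate K a x) c = ?term (deviate K b x) c" for c
    proof (cases "\<exists>c0. (K', c0) \<in> path_to K")
      case True
      then obtain c0 where c0: "(K', c0) \<in> path_to K" by blast
      have "deviate K a x K' c = deviate K b x K' c"
        using False by (simp add: deviate_def)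
      then show ?thesis
        using parent_mass_deviate_ancestor[OF K K' c0, of a x b] by simp
    qed (use False in \<open>simp add: deviate_def\<close>)
    have "(\<Sum>c\<in>A K'. ?term (deviate K a x) c - ?term (deviate K b x) c) = (\<Sum>c\<in>A K'. 0)"
      by (intro sum.cong refl) (unfold same, rule diff_self)
    then show ?thesis using False by simp
  qed
qed

text \<open>Hence the differences of counterfactual values seen by the local regret matchers are
  bounded by the range of the utilities.\<close>
lemma cfv_diff_eq_utility_diff:
  assumes Ih: "Ih \<in> IS" and g: "\<And>s. g s = (if s \<in> seqs_sub Ih then gg s else 0)"
    and K: "K \<in> subtree Ih" and a: "a \<in> A K" and b: "b \<in> A K"
  shows "cfv IS A par g x K a - cfv IS A par g x K b =
    (\<Sum>s\<in>seqs_sub Ih. gg s * (seqform Ih (deviate K a x) s - seqform Ih (deviate K b x) s))"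
proof -
  let ?cf = "cfv IS A par g x"
  let ?term = "\<lambda>y K' c'. parent_mass Ih (seqform Ih y) K' * (y K' c' - x K' c') * ?cf K' c'"
  have "(\<Sum>s\<in>seqs_sub Ih. gg s * (seqform Ih (deviate K a x) s - seqform Ih (deviate K b x) s)) =
        (\<Sum>s\<in>seqs_sub Ih. gg s * (seqform Ih (deviate K a x) s - seqform Ih x s)) -
        (\<Sum>s\<in>seqs_sub Ih. gg s * (seqform Ih (deviate K b x) s - seqform Ih x s))"
    by (simp add: sum_subtractf[symmetric] algebra_simps)
  also have "\<dots> = (\<Sum>K'\<in>subtree Ih. \<Sum>c'\<in>A K'. ?term (deviate K a x) K' c' - ?term (deviate K b x) K' c')"
    unfolding regret_decomposition_behavioural[OF Ih g] by (simp add: sum_subtractf)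
  also have "\<dots> = (\<Sum>K'\<in>subtree Ih. if K' = K then ?cf K a - ?cf K b else 0)"
    by (intro sum.cong refl sum_deviate_weighted_diff[OF K a b])
  also have "\<dots> = ?cf K a - ?cf K b"
    using K finite_subtree by simp
  finally show ?thesis by simp
qed

definition cfr_grad :: "'i \<Rightarrow> (nat \<Rightarrow> (('i \<times> 'a) option \<Rightarrow> real) \<Rightarrow> real) \<Rightarrow> nat
                        \<Rightarrow> ('i \<times> 'a) option \<Rightarrow> real" where
  "cfr_grad Ih l t s = (if s \<in> seqs_sub Ih then l t (unitv s) else 0)"

abbreviation cfr_cfv :: "'i \<Rightarrow> (nat \<Rightarrow> (('i \<times> 'a) option \<Rightarrow> real) \<Rightarrow> real) \<Rightarrow> nat \<Rightarrow> 'i \<Rightarrow> 'a \<Rightarrow> real"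
  where "cfr_cfv Ih l t \<equiv> cfv IS A par (cfr_grad Ih l t) (cfr_local IS A par Ih l t)"

lemma cfr_reg_Suc:
  assumes "J \<in> subtree Ih"
  shows "cfr_reg IS A par Ih l (Suc t) J a = cfr_reg IS A par Ih l t J a +
     (cfr_cfv Ih l t J a - (\<Sum>b\<in>A J. cfr_local IS A par Ih l t J b * cfr_cfv Ih l t J b))"
proof -
  have local: "cfr_local IS A par Ih l t = (\<lambda>J. rm_of (A J) (cfr_reg IS A par Ih l t J))"
    by (rule ext) (simp add: cfr_local_def)
  show ?thesis
    using assms unfolding local by (simp add: Let_def cfr_grad_def[abs_def])
qed

lemma behavioural_cfr_local: "behavioural Ih (cfr_local IS A par Ih l t)"
  unfolding behavioural_def
proof
  fix K assume "K \<in> subtree Ih"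
  then have "K \<in> IS" using subtree_IS by blast
  then show "(\<forall>c\<in>A K. 0 \<le> cfr_local IS A par Ih l t K c) \<and> (\<Sum>c\<in>A K. cfr_local IS A par Ih l t K c) = 1"
    using rm_of_distribution[OF finite_A A_nonempty] by (simp add: cfr_local_def)
qed

lemma cfr_grad_linear:
  assumes lin: "\<And>t y. l t y = (\<Sum>s\<in>seqs_sub Ih. gg t s * y s)"
  shows "cfr_grad Ih l t s = (if s \<in> seqs_sub Ih then gg t s else 0)"
proof -
  have "l t (unitv s) = gg t s" if "s \<in> seqs_sub Ih"
  proof -
    have "l t (unitv s) = (\<Sum>r\<in>seqs_sub Ih. if r = s then gg t r else 0)"
      unfolding lin unitv_def by (rule sum.cong) auto
    then show ?thesis using that finite_seqs_sub by simp
  qed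
  then show ?thesis by (simp add: cfr_grad_def)
qed

lemma Qset_sum_actions:
  assumes pi: "\<pi> \<in> Qset IS A par Ih" and K: "K \<in> subtree Ih"
  shows "(\<Sum>c\<in>A K. \<pi> (Some (K, c))) = parent_mass Ih \<pi> K"
proof (cases "K = Ih")
  case True
  then show ?thesis using pi by (simp add: Qset_def parent_mass_def)
next
  case False
  then have "Ih \<sqsubset> K" "K \<in> IS" using K by (auto simp: subI_def)
  then show ?thesis using pi False by (simp add: Qset_def parent_mass_def)
qed

lemma Piset_parent_mass_bounds:
  assumes "\<pi> \<in> Piset IS A par Ih"
  shows "0 \<le> parent_mass Ih \<pi> K" and "parent_mass Ih \<pi> K \<le> 1"
proof -
  have "\<pi> (par K) \<in> {0, 1}" using assms by (simp add: Piset_def)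
  then show "0 \<le> parent_mass Ih \<pi> K" "parent_mass Ih \<pi> K \<le> 1"
    by (auto simp: parent_mass_def)
qed

lemma cfr_instant_regret_eq:
  assumes Ih: "Ih \<in> IS" and lin: "\<And>t y. l t y = (\<Sum>s\<in>seqs_sub Ih. gg t s * y s)"
    and pi: "\<pi> \<in> Qset IS A par Ih"
  shows "l t \<pi> - l t (cfr_out IS A par Ih l t) = (\<Sum>K\<in>subtree Ih. \<Sum>c\<in>A K.
           \<pi> (Some (K, c)) * (cfr_reg IS A par Ih l (Suc t) K c - cfr_reg IS A par Ih l t K c))"
proof -
  let ?x = "cfr_local IS A par Ih l t"
  let ?dev = "\<lambda>K c. \<pi> (Some (K, c)) - parent_mass Ih \<pi> K * ?x K c"
  have "l t \<pi> - l t (cfr_out IS A par Ih l t) = (\<Sum>s\<in>seqs_sub Ih. gg t s * (\<pi> s - seqform Ih ?x s))"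
    unfolding lin cfr_out_eq_seqform by (simp add: sum_subtractf[symmetric] right_diff_distrib)
  also have "\<dots> = (\<Sum>(K, c)\<in>Sigma (subtree Ih) A. ?dev K c * cfr_cfv Ih l t K c)"
    by (rule regret_decomposition[OF Ih cfr_grad_linear[OF lin]])
  also have "\<dots> = (\<Sum>K\<in>subtree Ih. \<Sum>c\<in>A K. ?dev K c * cfr_cfv Ih l t K c)"
    by (rule sum.Sigma[symmetric]) (use finite_subtree finite_A subtree_IS in auto)
  also have "\<dots> = (\<Sum>K\<in>subtree Ih. \<Sum>c\<in>A K.
           \<pi> (Some (K, c)) * (cfr_reg IS A par Ih l (Suc t) K c - cfr_reg IS A par Ih l t K c))"
  proof (rule sum.cong[OF refl])
    fix K assume K: "K \<in> subtree Ih"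
    define V where "V = (\<Sum>b\<in>A K. ?x K b * cfr_cfv Ih l t K b)"
    have "(\<Sum>c\<in>A K. ?dev K c * cfr_cfv Ih l t K c) =
          (\<Sum>c\<in>A K. \<pi> (Some (K, c)) * cfr_cfv Ih l t K c) - (\<Sum>c\<in>A K. \<pi> (Some (K, c))) * V"
      unfolding Qset_sum_actions[OF pi K] V_def
      by (simp add: left_diff_distrib sum_subtractf sum_distrib_left mult.assoc)
    also have "\<dots> = (\<Sum>c\<in>A K. \<pi> (Some (K, c)) * (cfr_cfv Ih l t K c - V))"
      by (simp add: right_diff_distrib sum_subtractf sum_distrib_right)
    finally show "(\<Sum>c\<in>A K. ?dev K c * cfr_cfv Ih l t K c) = (\<Sum>c\<in>A K.
           \<pi> (Some (K, c)) * (cfr_reg IS A par Ih l (Suc t) K c - cfr_reg IS A par Ih l t K c))"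
      using cfr_reg_Suc[OF K] by (simp add: V_def)
  qed
  finally show ?thesis .
qed

lemma cfr_regret_eq:
  assumes Ih: "Ih \<in> IS" and lin: "\<And>t y. l t y = (\<Sum>s\<in>seqs_sub Ih. gg t s * y s)"
    and pi: "\<pi> \<in> Qset IS A par Ih"
  shows "(\<Sum>t<T. l t \<pi> - l t (cfr_out IS A par Ih l t)) =
    (\<Sum>K\<in>subtree Ih. \<Sum>c\<in>A K. \<pi> (Some (K, c)) * cfr_reg IS A par Ih l T K c)"
proof -
  let ?R = "cfr_reg IS A par Ih l"
  have "(\<Sum>t<T. l t \<pi> - l t (cfr_out IS A par Ih l t)) =
      (\<Sum>t<T. \<Sum>K\<in>subtree Ih. \<Sum>c\<in>A K. \<pi> (Some (K, c)) * (?R (Suc t) K c - ?R t K c))"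
    by (intro sum.cong refl cfr_instant_regret_eq[OF Ih lin pi])
  also have "\<dots> = (\<Sum>K\<in>subtree Ih. \<Sum>c\<in>A K. \<pi> (Some (K, c)) * (\<Sum>t<T. ?R (Suc t) K c - ?R t K c))"
    by (simp add: sum_distrib_left sum.swap[of _ "{..<T}"] del: cfr_reg.simps(2))
  also have "\<dots> = (\<Sum>K\<in>subtree Ih. \<Sum>c\<in>A K. \<pi> (Some (K, c)) * ?R T K c)"
  proof -
    have "(\<Sum>t<T. ?R (Suc t) K c - ?R t K c) = ?R T K c" for K c
      using sum_lessThan_telescope[of "\<lambda>t. ?R t K c" T] by (simp del: cfr_reg.simps(2))
    then show ?thesis by simp
  qed
  finally show ?thesis .
qed

lemma cfr_regret_bound:
  assumes Ih: "Ih \<in> IS" and lin: "\<And>t y. l t y = (\<Sum>s\<in>seqs_sub Ih. gg t s * y s)"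
    and pi: "\<pi> \<in> Piset IS A par Ih" and D: "0 \<le> D"
    and rng: "\<forall>t<T. \<forall>K\<in>subtree Ih. \<forall>a\<in>A K. \<forall>b\<in>A K. cfr_cfv Ih l t K a - cfr_cfv Ih l t K b \<le> D"
  shows "(\<Sum>t<T. l t \<pi> - l t (cfr_out IS A par Ih l t)) \<le>
           (\<Sum>K\<in>subtree Ih. D * sqrt (real (card (A K)) * real T))"
proof -
  let ?R = "cfr_reg IS A par Ih l"
  let ?B = "\<lambda>K. D * sqrt (real (card (A K)) * real T)"
  have piQ: "\<pi> \<in> Qset IS A par Ih" and pi01: "\<pi> s \<in> {0, 1}" for s
    using pi by (auto simp: Piset_def)
  have pi_nonneg: "0 \<le> \<pi> s" for s
    using pi01[of s] by auto
  have local: "?R T K c \<le> ?B K" if K: "K \<in> subtree Ih" and c: "c \<in> A K" for K c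
  proof (rule rm_cumulative_regret_le[where c = "\<lambda>t. cfr_cfv Ih l t K"])
    have KIS: "K \<in> IS" using K subtree_IS by blast
    show "finite (A K)" "A K \<noteq> {}" using finite_A[OF KIS] A_nonempty[OF KIS] by auto
    show "\<forall>t<T. \<forall>j\<in>A K. ?R (Suc t) K j = ?R t K j +
        (cfr_cfv Ih l t K j - (\<Sum>k\<in>A K. rm_of (A K) (?R t K) k * cfr_cfv Ih l t K k))"
      using cfr_reg_Suc[OF K] by (simp add: cfr_local_def)
  qed (use rng K D c in auto)
  have "(\<Sum>t<T. l t \<pi> - l t (cfr_out IS A par Ih l t)) =
      (\<Sum>K\<in>subtree Ih. \<Sum>c\<in>A K. \<pi> (Some (K, c)) * ?R T K c)"
    by (rule cfr_regret_eq[OF Ih lin piQ])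
  also have "\<dots> \<le> (\<Sum>K\<in>subtree Ih. \<Sum>c\<in>A K. \<pi> (Some (K, c)) * ?B K)"
    using local pi_nonneg by (intro sum_mono mult_left_mono) auto
  also have "\<dots> = (\<Sum>K\<in>subtree Ih. parent_mass Ih \<pi> K * ?B K)"
    by (intro sum.cong refl) (simp add: Qset_sum_actions[OF piQ] sum_distrib_right[symmetric])
  also have "\<dots> \<le> (\<Sum>K\<in>subtree Ih. ?B K)"
    using Piset_parent_mass_bounds[OF pi] D by (intro sum_mono mult_left_le_one_le) auto
  finally show ?thesis .
qed

section \<open>The learner over co \<Phi>\<close>

lemma finite_seqs: "finite (seqs IS A)"
proof -
  have "seqs IS A = insert None (Some ` Sigma IS A)" unfolding seqs_def by auto
  then show ?thesis using finite_IS finite_A by simp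
qed

lemma par_in_seqs: "I \<in> IS \<Longrightarrow> par I \<in> seqs IS A"
  using par_valid by (cases "par I") (auto simp: seqs_def)

lemma card_seqs_sub: "card (seqs_sub Ih) = (\<Sum>K\<in>subtree Ih. card (A K))"
proof -
  have "card (seqs_sub Ih) = card (Sigma (subtree Ih) A)"
    unfolding seqs_sub_eq by (rule card_image) simp
  then show ?thesis using finite_subtree finite_A subtree_IS by simp
qed

lemma card_seqs_sub_le: "card (seqs_sub Ih) \<le> card (seqs IS A)"
  by (rule card_mono[OF finite_seqs]) (auto simp: seqs_below_def)

lemma card_IS_le: "card IS \<le> card (seqs IS A)"
proof -
  have "card IS \<le> (\<Sum>I\<in>IS. card (A I))"
    using finite_A A_nonempty card_eq_sum[of IS] sum_mono[of IS "\<lambda>_. 1::nat" "\<lambda>I. card (A I)"]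
    by (simp add: Suc_leI card_gt_0_iff)
  also have "\<dots> = card (Some ` Sigma IS A)"
    using finite_IS finite_A by (simp add: card_image)
  also have "\<dots> \<le> card (seqs IS A)"
    by (rule card_mono[OF finite_seqs]) (auto simp: seqs_def)
  finally show ?thesis .
qed

lemma sum_sqrt_card_le:
  assumes "0 \<le> U"
  shows "(\<Sum>K\<in>subtree Ih. U * sqrt (real (card (A K)) * real T)) \<le> U * real (card (seqs_sub Ih)) * sqrt (real T)"
proof -
  have "(\<Sum>K\<in>subtree Ih. U * sqrt (real (card (A K)) * real T)) \<le>
        (\<Sum>K\<in>subtree Ih. U * (real (card (A K)) * sqrt (real T)))"
    using assms sqrt_of_nat_le by (intro sum_mono mult_left_mono) (auto simp: real_sqrt_mult mult_right_mono)
  also have "\<dots> = U * real (card (seqs_sub Ih)) * sqrt (real T)"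
    unfolding card_seqs_sub by (simp add: sum_distrib_left sum_distrib_right mult_ac)
  finally show ?thesis .
qed

text \<open>Only the column \<open>\<sigma>(Ih)\<close> of \<open>\<phi>\<^sub>I\<^sub>h\<^sub>,\<^sub>y\<close> depends on \<open>y\<close>.\<close>
lemma util_I_linear:
  assumes Ih: "Ih \<in> IS"
  shows "util_I IS A par G Ih t y = (\<Sum>r\<in>seqs_sub Ih. G t r (par Ih) * y r)"
proof -
  have diff: "phi IS A par Ih y r c - phi IS A par Ih (\<lambda>_. 0) r c =
           (if r \<in> seqs IS A \<and> c = par Ih \<and> seq_ge IS par r Ih then y r else 0)"
    if "c \<in> seqs IS A" for r c
    using that by (auto simp: phi_def)
  have "util_I IS A par G Ih t y = (\<Sum>r\<in>seqs IS A. \<Sum>c\<in>seqs IS A.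
      G t r c * (phi IS A par Ih y r c - phi IS A par Ih (\<lambda>_. 0) r c))"
    unfolding util_I_def Lval_def by (simp add: sum_subtractf[symmetric] right_diff_distrib)
  also have "\<dots> = (\<Sum>r\<in>seqs IS A. \<Sum>c\<in>seqs IS A.
      if c = par Ih then (if seq_ge IS par r Ih then G t r c * y r else 0) else 0)"
    by (intro sum.cong refl) (auto simp: diff)
  also have "\<dots> = (\<Sum>r\<in>seqs IS A. if seq_ge IS par r Ih then G t r (par Ih) * y r else 0)"
    using finite_seqs par_in_seqs[OF Ih] by (simp add: sum.delta')
  also have "\<dots> = (\<Sum>r\<in>seqs_sub Ih. G t r (par Ih) * y r)"
    unfolding seqs_below_def by (rule sum.inter_filter[OF finite_seqs, symmetric])
  finally show ?thesis .
qed

lemma phi_q_out_in_coPhi: "Ih \<in> IS \<Longrightarrow> phi IS A par Ih (q_out IS A par G Ih t) \<in> coPhi IS A par"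
  unfolding q_out_def cfr_out_eq_seqform by (rule phi_seqform_in_coPhi[OF _ behavioural_cfr_local])

lemma cfr_instance_regret_le:
  assumes I: "I \<in> IS" and pi: "\<pi> \<in> Piset IS A par I" and U: "0 \<le> U"
    and hyp: "\<forall>t<T. \<forall>\<phi>\<in>coPhi IS A par. \<forall>\<phi>'\<in>coPhi IS A par. Lval IS A (G t) \<phi> - Lval IS A (G t) \<phi>' \<le> U"
  shows "(\<Sum>t<T. util_I IS A par G I t \<pi> - util_I IS A par G I t (q_out IS A par G I t))
           \<le> U * real (card (seqs_sub I)) * sqrt (real T)"
proof -
  let ?l = "util_I IS A par G I"
  have lin: "?l t y = (\<Sum>s\<in>seqs_sub I. G t s (par I) * y s)" for t y
    by (rule util_I_linear[OF I])
  have "\<forall>t<T. \<forall>K\<in>subtree I. \<forall>a\<in>A K. \<forall>b\<in>A K. cfr_cfv I ?l t K a - cfr_cfv I ?l t K b \<le> U"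
  proof (intro allI impI ballI)
    fix t K a b assume that: "t < T" "K \<in> subtree I" "a \<in> A K" "b \<in> A K"
    let ?dev = "\<lambda>a. seqform I (deviate K a (cfr_local IS A par I ?l t))"
    have "cfr_cfv I ?l t K a - cfr_cfv I ?l t K b =
        (\<Sum>s\<in>seqs_sub I. G t s (par I) * (?dev a s - ?dev b s))"
      using cfv_diff_eq_utility_diff[OF I cfr_grad_linear[OF lin] that(2-4)] .
    also have "\<dots> = ?l t (?dev a) - ?l t (?dev b)"
      unfolding lin by (simp add: sum_subtractf[symmetric] right_diff_distrib)
    also have "\<dots> = Lval IS A (G t) (phi IS A par I (?dev a)) - Lval IS A (G t) (phi IS A par I (?dev b))"
      by (simp add: util_I_def)
    also have "\<dots> \<le> U"
      using hyp that behavioural_deviate[OF _ _ behavioural_cfr_local] phi_seqform_in_coPhi[OF I] by blast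
    finally show "cfr_cfv I ?l t K a - cfr_cfv I ?l t K b \<le> U" .
  qed
  then have "(\<Sum>t<T. ?l t \<pi> - ?l t (q_out IS A par G I t)) \<le> (\<Sum>K\<in>subtree I. U * sqrt (real (card (A K)) * real T))"
    unfolding q_out_def by (rule cfr_regret_bound[where l = ?l and gg = "\<lambda>t s. G t s (par I)", OF I lin pi U])
  also have "\<dots> \<le> U * real (card (seqs_sub I)) * sqrt (real T)"
    by (rule sum_sqrt_card_le[OF U])
  finally show ?thesis .
qed

lemma simplex_regret_le:
  assumes I: "I \<in> IS" and U: "0 \<le> U"
    and hyp: "\<forall>t<T. \<forall>\<phi>\<in>coPhi IS A par. \<forall>\<phi>'\<in>coPhi IS A par. Lval IS A (G t) \<phi> - Lval IS A (G t) \<phi>' \<le> U"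
  shows "(\<Sum>t<T. Lval IS A (G t) (phi IS A par I (q_out IS A par G I t))
                 - util_Delta IS A par G t (lam_out IS A par G t))
           \<le> U * real (card (seqs IS A)) * sqrt (real T)"
proof -
  have "(\<Sum>t<T. Lval IS A (G t) (phi IS A par I (q_out IS A par G I t))
                 - util_Delta IS A par G t (lam_out IS A par G t))
        \<le> U * sqrt (real (card IS) * real T)"
    unfolding lam_out_def
  proof (rule rm_regret_le[OF finite_IS _ _ _ U I])
    show "IS \<noteq> {}" using I by blast
    show "\<forall>t<T. \<forall>j\<in>IS. \<forall>k\<in>IS. Lval IS A (G t) (phi IS A par j (q_out IS A par G j t)) -
                             Lval IS A (G t) (phi IS A par k (q_out IS A par G k t)) \<le> U"
      using hyp phi_q_out_in_coPhi by blast
  qed (simp add: util_Delta_def)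
  also have "\<dots> \<le> U * real (card (seqs IS A)) * sqrt (real T)"
  proof -
    have "sqrt (real (card IS)) \<le> real (card (seqs IS A))"
      using sqrt_of_nat_le[of "card IS"] card_IS_le by linarith
    then show ?thesis
      using U by (simp add: real_sqrt_mult mult.assoc mult_left_mono mult_right_mono)
  qed
  finally show ?thesis .
qed

lemma regret_against_Phi_le:
  assumes I: "I \<in> IS" and pi: "\<pi> \<in> Piset IS A par I" and U: "0 \<le> U"
    and hyp: "\<forall>t<T. \<forall>\<phi>\<in>coPhi IS A par. \<forall>\<phi>'\<in>coPhi IS A par. Lval IS A (G t) \<phi> - Lval IS A (G t) \<phi>' \<le> U"
  shows "(\<Sum>t<T. Lval IS A (G t) (phi IS A par I \<pi>) - Lval IS A (G t) (phi_out IS A par G t))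
           \<le> 2 * U * real (card (seqs IS A)) * sqrt (real T)"
proof -
  have "Lval IS A (G t) (phi_out IS A par G t) = util_Delta IS A par G t (lam_out IS A par G t)" for t
    unfolding phi_out_def util_Delta_def by (rule Lval_convex_comb[OF finite_IS])
  then have "(\<Sum>t<T. Lval IS A (G t) (phi IS A par I \<pi>) - Lval IS A (G t) (phi_out IS A par G t)) =
      (\<Sum>t<T. util_I IS A par G I t \<pi> - util_I IS A par G I t (q_out IS A par G I t)) +
      (\<Sum>t<T. Lval IS A (G t) (phi IS A par I (q_out IS A par G I t))
             - util_Delta IS A par G t (lam_out IS A par G t))"
    by (simp add: util_I_def sum.distrib[symmetric])
  also have "\<dots> \<le> U * real (card (seqs_sub I)) * sqrt (real T) + U * real (card (seqs IS A)) * sqrt (real T)"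
    by (intro add_mono cfr_instance_regret_le[OF I pi U hyp] simplex_regret_le[OF I U hyp])
  also have "\<dots> \<le> 2 * U * real (card (seqs IS A)) * sqrt (real T)"
  proof -
    have "U * real (card (seqs_sub I)) \<le> U * real (card (seqs IS A))"
      using card_seqs_sub_le[of I] U by (simp add: mult_left_mono)
    then have "U * real (card (seqs_sub I)) * sqrt (real T) \<le> U * real (card (seqs IS A)) * sqrt (real T)"
      by (simp add: mult_right_mono)
    moreover have "2 * U * real (card (seqs IS A)) * sqrt (real T) =
        U * real (card (seqs IS A)) * sqrt (real T) + U * real (card (seqs IS A)) * sqrt (real T)"
      by simp
    ultimately show ?thesis by linarith
  qed
  finally show ?thesis .
qed

end

theorem theorem2:
  fixes IS :: "'i set" and A :: "'i \<Rightarrow> 'a set" and par :: "'i \<Rightarrow> ('i \<times> 'a) option"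
    and G :: "nat \<Rightarrow> ('i \<times> 'a) option \<Rightarrow> ('i \<times> 'a) option \<Rightarrow> real"
    and U :: real and T :: nat
  assumes "tfdp IS A par" and "IS \<noteq> {}"
    and "\<forall>t<T. \<forall>\<phi>\<in>coPhi IS A par. \<forall>\<phi>'\<in>coPhi IS A par.
            Lval IS A (G t) \<phi> - Lval IS A (G t) \<phi>' \<le> U"
  shows "\<forall>\<phi>s\<in>coPhi IS A par.
           (\<Sum>t<T. Lval IS A (G t) \<phi>s - Lval IS A (G t) (phi_out IS A par G t))
             \<le> 2 * U * real (card (seqs IS A)) * sqrt (real T)"
proof
  interpret tree_form IS A par by unfold_locales (rule assms(1))
  let ?B = "2 * U * real (card (seqs IS A)) * sqrt (real T)"
  let ?regret = "\<lambda>\<phi>. \<Sum>t<T. Lval IS A (G t) \<phi> - Lval IS A (G t) (phi_out IS A par G t)"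
  fix \<phi>s assume \<phi>s: "\<phi>s \<in> coPhi IS A par"
  then obtain n :: nat and w M where comb: "\<phi>s = (\<lambda>r c. \<Sum>k<n. w k * M k r c)"
    and wM: "\<forall>k<n. 0 \<le> w k \<and> M k \<in> Phi IS A par" and w1: "(\<Sum>k<n. w k) = 1"
    unfolding coPhi_def mem_Collect_eq by blast
  show "?regret \<phi>s \<le> ?B"
  proof (cases "T = 0")
    case False
    then have U: "0 \<le> U" using assms(3) \<phi>s by force
    have "?regret (M k) \<le> ?B" if "k < n" for k
      using wM that regret_against_Phi_le[OF _ _ U assms(3)] by (auto simp: Phi_def)
    then have "(\<Sum>k<n. w k * ?regret (M k)) \<le> (\<Sum>k<n. w k * ?B)"
      using wM by (intro sum_mono mult_left_mono) auto
    then show ?thesis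
      using w1 by (simp add: comb regret_convex_comb sum_distrib_right[symmetric])
  qed simp
qed

end
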